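(* The function $\mu(\cdot)$ satisfies $\displaystyle\lim_{\lambda\to\infty}\frac{\mu(\lambda)}{\lambda}=\infty$. In particular, $\mu:[\lambda_0,\infty)\to[\mu(\lambda_0),\infty)$ is a bijection.
   Context: Setting: - $g>0$, $\sigma>0$, and $p_0<p_1<0$. - $\gamma=\gamma_1$ on $[p_0,p_1)$ and $\gamma=\gamma_2$ on $(p_1,0]$, with $\gamma_1\in C^\alpha([p_0,p_1])$ and $\gamma_2\in C^\alpha([p_1,0])$. - $\Gamma(p)=\int_0^p\gamma$, and $a(p;\lambda)=\sqrt{\lambda-2\Gamma(p)}$. - $\mathfrak z(\cdot;\lambda,\mu)$ solves $(a^3\mathfrak z')'-\mu a\mathfrak z=0$ on $(p_0,0)$ with $\mathfrak z(p_0)=0$, $\mathfrak z'(p_0)=1$. - $\Xi(\lambda,\mu):=\lambda^{3/2}\mathfrak z'(0;\lambda,\mu)-(g+\sigma\mu)\mathfrak z(0;\lambda,\mu)$. - $\lambda_0$ is the unique $\lambda>2\max\Gamma$ with $\frac1g=\int_{p_0}^0a(p;\lambda)^{-3}dp$. - For $\lambda\ge\lambda_0$, $\mu(\lambda)$ is the largest zero $\mu\ge0$ of $\Xi(\lambda,\cdot)$, i.e. $\Xi(\lambda,\mu(\lambda))=0$ and $\Xi(\lambda,\mu')<0$ for all $\mu'>\mu(\lambda)$. *)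

theory Defs
  imports "HOL-Analysis.Analysis"
begin

definition holder_on :: "real \<Rightarrow> real set \<Rightarrow> (real \<Rightarrow> real) \<Rightarrow> bool" where
  "holder_on \<alpha> S f \<longleftrightarrow> (\<exists>C. \<forall>x\<in>S. \<forall>y\<in>S. \<bar>f x - f y\<bar> \<le> C * \<bar>x - y\<bar> powr \<alpha>)"

text \<open>The piecewise vorticity gamma: gamma1 on [p0,p1), gamma2 on [p1,0]
  (the value at the single point p1 is irrelevant).\<close>
definition gam :: "real \<Rightarrow> (real \<Rightarrow> real) \<Rightarrow> (real \<Rightarrow> real) \<Rightarrow> real \<Rightarrow> real" where
  "gam p1 \<gamma>1 \<gamma>2 p = (if p < p1 then \<gamma>1 p else \<gamma>2 p)"

definition Gam :: "(real \<Rightarrow> real) \<Rightarrow> real \<Rightarrow> real" where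
  "Gam \<gamma> p = (if 0 \<le> p then integral {0..p} \<gamma> else - integral {p..0} \<gamma>)"

definition aa :: "(real \<Rightarrow> real) \<Rightarrow> real \<Rightarrow> real \<Rightarrow> real" where
  "aa \<gamma> l p = sqrt (l - 2 * Gam \<gamma> p)"

definition is_zsol :: "(real \<Rightarrow> real) \<Rightarrow> real \<Rightarrow> real \<Rightarrow> real \<Rightarrow> (real \<Rightarrow> real) \<Rightarrow> (real \<Rightarrow> real) \<Rightarrow> bool" where
  "is_zsol \<gamma> p0 l m z z' \<longleftrightarrow>
     (\<forall>p\<in>{p0..0}. (z has_real_derivative z' p) (at p within {p0..0})) \<and>
     continuous_on {p0..0} z' \<and>
     (\<forall>p\<in>{p0<..<0}. ((\<lambda>q. aa \<gamma> l q ^ 3 * z' q) has_real_derivative m * aa \<gamma> l p * z p) (at p)) \<and>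
     z p0 = 0 \<and> z' p0 = 1"

definition Xi :: "(real \<Rightarrow> real) \<Rightarrow> real \<Rightarrow> real \<Rightarrow> real \<Rightarrow> real \<Rightarrow> real \<Rightarrow> real" where
  "Xi \<gamma> p0 g \<sigma> l m = (THE v. \<exists>z z'. is_zsol \<gamma> p0 l m z z' \<and>
        v = l powr (3/2) * z' 0 - (g + \<sigma> * m) * z 0)"

definition lam0 :: "(real \<Rightarrow> real) \<Rightarrow> real \<Rightarrow> real \<Rightarrow> real" where
  "lam0 \<gamma> p0 g = (THE l. l > 2 * Sup (Gam \<gamma> ` {p0..0}) \<and>
        1 / g = integral {p0..0} (\<lambda>p. 1 / aa \<gamma> l p ^ 3))"

definition muf :: "(real \<Rightarrow> real) \<Rightarrow> real \<Rightarrow> real \<Rightarrow> real \<Rightarrow> real \<Rightarrow> real" where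
  "muf \<gamma> p0 g \<sigma> l = (THE m. 0 \<le> m \<and> Xi \<gamma> p0 g \<sigma> l m = 0 \<and>
        (\<forall>m'>m. Xi \<gamma> p0 g \<sigma> l m' < 0))"

end

theory Submission
  imports Defs
begin

(*
  For fixed \<lambda> the problem (a^3 z')' = \<mu> a z, z(p0) = 0, z'(p0) = 1 has a unique solution
  with z(0) > 0, and \<Xi>(\<lambda>, \<mu>) = z(0) (q(\<lambda>, \<mu>) - g - \<sigma> \<mu>), where q = a^3 z' / z at p = 0.
  By the Dirichlet principle q is the minimum over profiles \<phi> with \<phi>(p0) = 0, \<phi>(0) = 1 of
  the energy \<integral> a^3 \<phi>'^2 + \<mu> a \<phi>^2. Since the energy is affine in \<mu> and increasing in \<lambda>,
  q is concave in \<mu>, strictly increasing and locally Lipschitz in \<lambda>, and bounded below by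
  (\<lambda> - 2 max \<Gamma>)^(3/2) / |p0|. Hence \<mu>(\<lambda>) is strictly increasing and \<mu>(\<lambda>) \<ge> C \<lambda> for large \<lambda>;
  concavity in \<mu> identifies \<mu>(\<lambda>) = y with a zero of \<lambda> \<mapsto> q(\<lambda>, y) - g - \<sigma> y, which exists
  for every y \<ge> \<mu>(\<lambda>0) by the intermediate value theorem.
*)

section \<open>Sturm--Liouville problems with positive coefficients\<close>

lemma has_integral_exp_affine:
  fixes K u v :: real
  assumes "0 < K" "u \<le> v"
  shows "((\<lambda>t. exp (K * (t - u))) has_integral (exp (K * (v - u)) - 1) / K) {u..v}"
proof -
  have "((\<lambda>t. exp (K * (t - u)) / K) has_vector_derivative exp (K * (x - u))) (at x within {u..v})" for x
    unfolding has_real_derivative_iff_has_vector_derivative[symmetric]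
    using assms(1) by (auto intro!: derivative_eq_intros)
  from fundamental_theorem_of_calculus[OF assms(2) this]
  show ?thesis by (simp add: diff_divide_distrib)
qed

lemma mvt_real_within:
  fixes f f' :: "real \<Rightarrow> real"
  assumes "a \<le> a'" "\<And>x. x \<in> {a..a'} \<Longrightarrow> (f has_real_derivative f' x) (at x within {a..a'})"
  shows "\<exists>\<xi>\<in>{a..a'}. f a' - f a = f' \<xi> * (a' - a)"
  using mvt_very_simple[OF assms(1), of f "\<lambda>x. (*) (f' x)"] assms(2)
  by (simp add: has_field_derivative_def)

text \<open>The equation \<open>(b z')' = c z\<close> as the first-order system \<open>Z' = W / b\<close>, \<open>W' = c Z\<close> for
  \<open>Z = z\<close> and the flux \<open>W = b z'\<close>, normalised by \<open>z(x0) = 0\<close>, \<open>z'(x0) = 1\<close>.\<close>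
definition sl_solution ::
    "real \<Rightarrow> real \<Rightarrow> (real \<Rightarrow> real) \<Rightarrow> (real \<Rightarrow> real) \<Rightarrow> (real \<Rightarrow> real) \<Rightarrow> (real \<Rightarrow> real) \<Rightarrow> bool" where
  "sl_solution x0 x1 b c Z W \<longleftrightarrow> Z x0 = 0 \<and> W x0 = b x0 \<and>
     (\<forall>p\<in>{x0..x1}. (Z has_real_derivative W p / b p) (at p within {x0..x1}) \<and>
                   (W has_real_derivative c p * Z p) (at p within {x0..x1}))"

locale sturm_liouville =
  fixes x0 x1 :: real and b c :: "real \<Rightarrow> real"
  assumes interval: "x0 < x1"
    and continuous_b: "continuous_on {x0..x1} b"
    and continuous_c: "continuous_on {x0..x1} c"
    and b_pos: "\<And>p. p \<in> {x0..x1} \<Longrightarrow> 0 < b p"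
    and c_nonneg: "\<And>p. p \<in> {x0..x1} \<Longrightarrow> 0 \<le> c p"
begin

lemma b_x0_pos: "0 < b x0"
  using b_pos interval by auto

lemma at_interior: "p \<in> {x0<..<x1} \<Longrightarrow> at p within {x0..x1} = at p"
  by (simp add: at_within_Icc_at)

lemma integrable_on_initial_segment:
  fixes f :: "real \<Rightarrow> real"
  assumes "continuous_on {x0..x1} f" "p \<in> {x0..x1}"
  shows "f integrable_on {x0..p}"
proof -
  have "{x0..p} \<subseteq> {x0..x1}" using assms(2) by auto
  with assms(1) have "continuous_on {x0..p} f" by (rule continuous_on_subset)
  then show ?thesis by (rule integrable_continuous_interval)
qed

lemma continuous_on_divide_b: "continuous_on {x0..x1} w \<Longrightarrow> continuous_on {x0..x1} (\<lambda>t. w t / b t)"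
  by (intro continuous_on_divide continuous_b) (use b_pos in force)+

lemma coefficient_bounds:
  obtains Cm Dm where "0 \<le> Cm" "\<And>p. p \<in> {x0..x1} \<Longrightarrow> c p \<le> Cm"
    "0 \<le> Dm" "\<And>p. p \<in> {x0..x1} \<Longrightarrow> 1 / b p \<le> Dm"
proof -
  obtain Cm where "0 \<le> Cm" "\<And>p. p \<in> {x0..x1} \<Longrightarrow> norm (c p) \<le> Cm"
    using continuous_on_compact_bound[OF compact_Icc continuous_c] by blast
  moreover obtain Dm where "0 \<le> Dm" "\<And>p. p \<in> {x0..x1} \<Longrightarrow> norm (1 / b p) \<le> Dm"
    using continuous_on_compact_bound[OF compact_Icc continuous_on_divide_b[OF continuous_on_const]]
    by blast
  moreover have "1 / b p \<le> Dm" if "p \<in> {x0..x1}" "norm (1 / b p) \<le> Dm" for p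
    using that b_pos[OF that(1)] by simp
  ultimately show ?thesis
    by (intro that[of Cm Dm]) (auto dest: abs_le_D1)
qed

text \<open>Gronwall-type energy argument: \<open>exp (-K p)\<close> times the squared distance of the two
  solutions has nonpositive derivative once \<open>K \<ge> 1/b + c\<close>.\<close>
lemma sl_system_unique:
  assumes cont: "continuous_on {x0..x1} Z" "continuous_on {x0..x1} W"
      "continuous_on {x0..x1} Z'" "continuous_on {x0..x1} W'"
    and dZ: "\<And>p. p \<in> {x0<..<x1} \<Longrightarrow> (Z has_real_derivative W p / b p) (at p)"
    and dW: "\<And>p. p \<in> {x0<..<x1} \<Longrightarrow> (W has_real_derivative c p * Z p) (at p)"
    and dZ': "\<And>p. p \<in> {x0<..<x1} \<Longrightarrow> (Z' has_real_derivative W' p / b p) (at p)"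
    and dW': "\<And>p. p \<in> {x0<..<x1} \<Longrightarrow> (W' has_real_derivative c p * Z' p) (at p)"
    and init: "Z x0 = Z' x0" "W x0 = W' x0"
    and p: "p \<in> {x0..x1}"
  shows "Z p = Z' p \<and> W p = W' p"
proof -
  obtain Cm Dm where Cm: "\<And>p. p \<in> {x0..x1} \<Longrightarrow> c p \<le> Cm"
    and Dm: "\<And>p. p \<in> {x0..x1} \<Longrightarrow> 1 / b p \<le> Dm" by (meson coefficient_bounds)
  define K where "K = Cm + Dm"
  define E where "E q = exp (- K * q) * ((Z q - Z' q)^2 + (W q - W' q)^2)" for q
  have "\<exists>y. (E has_real_derivative y) (at x) \<and> y \<le> 0" if x: "x0 < x" "x < x1" for x
  proof -
    have xi: "x \<in> {x0..x1}" and xo: "x \<in> {x0<..<x1}" using x by auto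
    define d where "d = Z x - Z' x"
    define e where "e = W x - W' x"
    have bx: "0 < b x" using b_pos[OF xi] .
    have "(E has_real_derivative exp (- K * x) * (2 * d * (W x / b x - W' x / b x)
        + 2 * e * (c x * Z x - c x * Z' x)) - K * exp (- K * x) * (d^2 + e^2)) (at x)"
      unfolding E_def[abs_def] d_def e_def using bx
      by (auto intro!: derivative_eq_intros dZ[OF xo] dW[OF xo] dZ'[OF xo] dW'[OF xo]
          simp: field_simps)
    moreover have "2 * d * (W x / b x - W' x / b x) + 2 * e * (c x * Z x - c x * Z' x)
        = (2 * d * e) * (1 / b x + c x)"
      using bx by (simp add: d_def e_def field_simps)
    ultimately have deriv: "(E has_real_derivative exp (- K * x) * ((2 * d * e) * (1 / b x + c x))
        - K * exp (- K * x) * (d^2 + e^2)) (at x)"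
      by simp
    have "(2 * d * e) * (1 / b x + c x) \<le> (d^2 + e^2) * K"
    proof (rule mult_mono)
      show "2 * d * e \<le> d^2 + e^2" using sum_squares_bound[of d e] by (simp add: power2_eq_square)
      show "1 / b x + c x \<le> K" using Cm[OF xi] Dm[OF xi] by (simp add: K_def)
      show "0 \<le> 1 / b x + c x" using bx c_nonneg[OF xi] by simp
    qed simp
    then have "exp (- K * x) * ((2 * d * e) * (1 / b x + c x)) \<le> K * exp (- K * x) * (d^2 + e^2)"
      using mult_left_mono[of _ _ "exp (- K * x)"] by (simp add: ac_simps)
    with deriv show ?thesis by (intro exI conjI) auto
  qed
  moreover have "continuous_on {x0..p} E"
  proof -
    have sub: "{x0..p} \<subseteq> {x0..x1}" using p by auto
    show ?thesis unfolding E_def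
      by (intro continuous_intros continuous_on_subset[OF cont(1) sub] continuous_on_subset[OF cont(2) sub]
          continuous_on_subset[OF cont(3) sub] continuous_on_subset[OF cont(4) sub])
  qed
  ultimately have "E p \<le> E x0"
    using p by (intro DERIV_nonpos_imp_decreasing_open[of x0 p E]) auto
  also have "E x0 = 0" using init by (simp add: E_def)
  finally have "(Z p - Z' p)^2 + (W p - W' p)^2 \<le> 0"
    by (simp add: E_def mult_le_0_iff)
  then show ?thesis
    by (simp add: sum_power2_le_zero_iff)
qed

lemma sl_solution_continuous:
  assumes "sl_solution x0 x1 b c Z W"
  shows "continuous_on {x0..x1} Z" "continuous_on {x0..x1} W"
  using assms unfolding sl_solution_def
  by (auto intro: DERIV_continuous_on[where D="\<lambda>p. W p / b p"] DERIV_continuous_on[where D="\<lambda>p. c p * Z p"])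

lemma sl_solution_has_derivative_at:
  assumes "sl_solution x0 x1 b c Z W" "p \<in> {x0<..<x1}"
  shows "(Z has_real_derivative W p / b p) (at p)" "(W has_real_derivative c p * Z p) (at p)"
proof -
  have "p \<in> {x0..x1}" using assms(2) by auto
  then have "(Z has_real_derivative W p / b p) (at p within {x0..x1})"
    "(W has_real_derivative c p * Z p) (at p within {x0..x1})"
    using assms(1) unfolding sl_solution_def by blast+
  then show "(Z has_real_derivative W p / b p) (at p)" "(W has_real_derivative c p * Z p) (at p)"
    by (simp_all add: at_interior[OF assms(2)])
qed

lemma sl_solution_unique:
  assumes Z: "sl_solution x0 x1 b c Z W" and Z': "sl_solution x0 x1 b c Z' W'" and p: "p \<in> {x0..x1}"
  shows "Z p = Z' p \<and> W p = W' p"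
proof (rule sl_system_unique[OF sl_solution_continuous[OF Z] sl_solution_continuous[OF Z']
      sl_solution_has_derivative_at[OF Z] sl_solution_has_derivative_at[OF Z'] _ _ p])
  show "Z x0 = Z' x0" "W x0 = W' x0" using Z Z' by (simp_all add: sl_solution_def)
qed


lemma second_order_solution_unique:
  assumes sol: "sl_solution x0 x1 b c Z W"
    and dz: "\<forall>p\<in>{x0..x1}. (z has_real_derivative z' p) (at p within {x0..x1})"
    and z'_cont: "continuous_on {x0..x1} z'"
    and flux: "\<forall>p\<in>{x0<..<x1}. ((\<lambda>q. b q * z' q) has_real_derivative c p * z p) (at p)"
    and init: "z x0 = 0" "z' x0 = 1"
    and p: "p \<in> {x0..x1}"
  shows "z p = Z p \<and> b p * z' p = W p"
proof -
  have "z p = Z p \<and> (\<lambda>q. b q * z' q) p = W p"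
  proof (rule sl_system_unique[OF _ _ sl_solution_continuous[OF sol] _ _ sl_solution_has_derivative_at[OF sol] _ _ p])
    show "continuous_on {x0..x1} z" using dz by (intro DERIV_continuous_on[where D=z']) auto
    show "continuous_on {x0..x1} (\<lambda>q. b q * z' q)" by (intro continuous_intros continuous_b z'_cont)
    fix q assume q: "q \<in> {x0<..<x1}"
    then have "q \<in> {x0..x1}" by auto
    then have "(z has_real_derivative z' q) (at q within {x0..x1})"
      using dz by blast
    then have "(z has_real_derivative z' q) (at q)"
      by (simp add: at_interior[OF q])
    then show "(z has_real_derivative b q * z' q / b q) (at q)"
      using b_pos[OF \<open>q \<in> {x0..x1}\<close>] by simp
    show "((\<lambda>q. b q * z' q) has_real_derivative c q * z q) (at q)" using flux q by blast
  qed (use sol init in \<open>auto simp: sl_solution_def\<close>)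
  then show ?thesis by simp
qed

definition picard_Z :: "(real \<Rightarrow> real) \<Rightarrow> real \<Rightarrow> real" where
  "picard_Z w p = integral {x0..p} (\<lambda>t. w t / b t)"

definition picard_W :: "(real \<Rightarrow> real) \<Rightarrow> real \<Rightarrow> real" where
  "picard_W w p = b x0 + integral {x0..p} (\<lambda>s. c s * picard_Z w s)"

fun picard_iter :: "nat \<Rightarrow> real \<Rightarrow> real" where
  "picard_iter 0 = (\<lambda>_. b x0)"
| "picard_iter (Suc n) = picard_W (picard_iter n)"

definition picard_limit :: "real \<Rightarrow> real" where
  "picard_limit p = (SUP n. picard_iter n p)"

lemma continuous_on_picard_Z: "continuous_on {x0..x1} w \<Longrightarrow> continuous_on {x0..x1} (picard_Z w)"
  unfolding picard_Z_def
  by (rule indefinite_integral_continuous_1, rule integrable_continuous_interval, erule continuous_on_divide_b)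

lemma integrable_flux_integrand:
  "continuous_on {x0..x1} w \<Longrightarrow> p \<in> {x0..x1} \<Longrightarrow> (\<lambda>s. c s * picard_Z w s) integrable_on {x0..p}"
  by (intro integrable_on_initial_segment continuous_on_mult continuous_c continuous_on_picard_Z)

lemma continuous_on_picard_W: "continuous_on {x0..x1} w \<Longrightarrow> continuous_on {x0..x1} (picard_W w)"
  unfolding picard_W_def
  by (intro continuous_on_add continuous_on_const indefinite_integral_continuous_1
      integrable_continuous_interval continuous_on_mult continuous_c continuous_on_picard_Z)

lemma picard_Z_mono:
  assumes "continuous_on {x0..x1} w" "continuous_on {x0..x1} w'"
    and "\<And>t. t \<in> {x0..x1} \<Longrightarrow> w t \<le> w' t" and p: "p \<in> {x0..x1}"
  shows "picard_Z w p \<le> picard_Z w' p"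
  unfolding picard_Z_def
proof (rule integral_le)
  show "(\<lambda>t. w t / b t) integrable_on {x0..p}" "(\<lambda>t. w' t / b t) integrable_on {x0..p}"
    using assms by (simp_all add: integrable_on_initial_segment continuous_on_divide_b)
  fix t assume "t \<in> {x0..p}"
  then have t: "t \<in> {x0..x1}" using p by auto
  show "w t / b t \<le> w' t / b t"
    using assms(3)[OF t] b_pos[OF t] by (simp add: divide_right_mono)
qed

lemma picard_Z_nonneg:
  "continuous_on {x0..x1} w \<Longrightarrow> (\<And>t. t \<in> {x0..x1} \<Longrightarrow> 0 \<le> w t) \<Longrightarrow> p \<in> {x0..x1} \<Longrightarrow> 0 \<le> picard_Z w p"
  using picard_Z_mono[of "\<lambda>_. 0" w p] by (simp add: picard_Z_def)

lemma picard_W_mono: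
  assumes w: "continuous_on {x0..x1} w" "continuous_on {x0..x1} w'"
    and le: "\<And>t. t \<in> {x0..x1} \<Longrightarrow> w t \<le> w' t" and p: "p \<in> {x0..x1}"
  shows "picard_W w p \<le> picard_W w' p"
proof -
  have "integral {x0..p} (\<lambda>s. c s * picard_Z w s) \<le> integral {x0..p} (\<lambda>s. c s * picard_Z w' s)"
  proof (rule integral_le[OF integrable_flux_integrand[OF w(1) p] integrable_flux_integrand[OF w(2) p]])
    fix s assume "s \<in> {x0..p}"
    then have s: "s \<in> {x0..x1}" using p by auto
    show "c s * picard_Z w s \<le> c s * picard_Z w' s"
      by (rule mult_left_mono[OF picard_Z_mono[OF w le s] c_nonneg[OF s]])
  qed
  then show ?thesis by (simp add: picard_W_def)
qed

lemma picard_W_ge: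
  assumes w: "continuous_on {x0..x1} w" "\<And>t. t \<in> {x0..x1} \<Longrightarrow> 0 \<le> w t" and p: "p \<in> {x0..x1}"
  shows "b x0 \<le> picard_W w p"
proof -
  have "0 \<le> integral {x0..p} (\<lambda>s. c s * picard_Z w s)"
  proof (rule integral_nonneg[OF integrable_flux_integrand[OF w(1) p]])
    fix s assume "s \<in> {x0..p}"
    then have s: "s \<in> {x0..x1}" using p by auto
    show "0 \<le> c s * picard_Z w s" using c_nonneg[OF s] picard_Z_nonneg[OF w s] by simp
  qed
  then show ?thesis by (simp add: picard_W_def)
qed

lemma continuous_on_picard_iter: "continuous_on {x0..x1} (picard_iter n)"
  by (induction n) (auto intro: continuous_on_picard_W)

lemma picard_iter_ge: "p \<in> {x0..x1} \<Longrightarrow> b x0 \<le> picard_iter n p"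
proof (induction n arbitrary: p)
  case (Suc n)
  then show ?case
    using picard_W_ge[OF continuous_on_picard_iter] b_x0_pos by (simp add: order_trans[OF less_imp_le])
qed simp

lemma picard_iter_le_Suc: "p \<in> {x0..x1} \<Longrightarrow> picard_iter n p \<le> picard_iter (Suc n) p"
proof (induction n arbitrary: p)
  case 0
  then show ?case using picard_iter_ge[of p 1] by simp
next
  case (Suc n)
  then show ?case using picard_W_mono[OF continuous_on_picard_iter continuous_on_picard_iter, of n "Suc n"] by simp
qed

lemma picard_W_exp_bound:
  assumes Cm: "\<And>p. p \<in> {x0..x1} \<Longrightarrow> c p \<le> Cm" and Dm: "0 \<le> Dm" "\<And>p. p \<in> {x0..x1} \<Longrightarrow> 1 / b p \<le> Dm"
    and K: "0 < K" "Cm * Dm \<le> K^2"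
    and w: "continuous_on {x0..x1} w" "\<And>t. t \<in> {x0..x1} \<Longrightarrow> w t \<le> b x0 * exp (K * (t - x0))"
    and p: "p \<in> {x0..x1}"
  shows "picard_W w p \<le> b x0 * exp (K * (p - x0))"
proof -
  have Z_bound: "picard_Z w s \<le> Dm * b x0 / K * exp (K * (s - x0))" if s: "s \<in> {x0..x1}" for s
  proof -
    have "((\<lambda>t. Dm * b x0 * exp (K * (t - x0))) has_integral Dm * b x0 * ((exp (K * (s - x0)) - 1) / K)) {x0..s}"
      using s by (intro has_integral_mult_right has_integral_exp_affine K(1)) auto
    moreover have "w t / b t \<le> Dm * b x0 * exp (K * (t - x0))" if "t \<in> {x0..s}" for t
    proof -
      have t: "t \<in> {x0..x1}" using that s by auto
      have "w t / b t \<le> b x0 * exp (K * (t - x0)) * (1 / b t)"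
        using w(2)[OF t] b_pos[OF t] by (simp add: divide_right_mono)
      also have "\<dots> \<le> b x0 * exp (K * (t - x0)) * Dm"
        using Dm(2)[OF t] b_x0_pos by (intro mult_left_mono) auto
      finally show ?thesis by (simp add: ac_simps)
    qed
    ultimately have "picard_Z w s \<le> Dm * b x0 * ((exp (K * (s - x0)) - 1) / K)"
      unfolding picard_Z_def
      by (intro has_integral_le[OF integrable_integral]) (auto intro: integrable_on_initial_segment
          continuous_on_divide_b w(1) s)
    also have "\<dots> \<le> Dm * b x0 / K * exp (K * (s - x0))"
      using Dm(1) b_x0_pos K(1) by (simp add: divide_right_mono mult_left_mono field_simps)
    finally show ?thesis .
  qed
  have "((\<lambda>s. Cm * Dm * b x0 / K * exp (K * (s - x0))) has_integral
      Cm * Dm * b x0 / K * ((exp (K * (p - x0)) - 1) / K)) {x0..p}"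
    using p by (intro has_integral_mult_right has_integral_exp_affine K(1)) auto
  moreover have "c s * picard_Z w s \<le> Cm * Dm * b x0 / K * exp (K * (s - x0))" if "s \<in> {x0..p}" for s
  proof -
    have s: "s \<in> {x0..x1}" using that p by auto
    have "c s * picard_Z w s \<le> c s * (Dm * b x0 / K * exp (K * (s - x0)))"
      by (rule mult_left_mono[OF Z_bound[OF s] c_nonneg[OF s]])
    also have "\<dots> \<le> Cm * (Dm * b x0 / K * exp (K * (s - x0)))"
      using Cm[OF s] Dm(1) b_x0_pos K(1) by (intro mult_right_mono) auto
    finally show ?thesis by simp
  qed
  ultimately have "integral {x0..p} (\<lambda>s. c s * picard_Z w s) \<le> Cm * Dm / K^2 * (b x0 * (exp (K * (p - x0)) - 1))"
    by (intro has_integral_le[OF integrable_integral[OF integrable_flux_integrand[OF w(1) p]]])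
       (auto simp: power2_eq_square field_simps)
  also have "\<dots> \<le> 1 * (b x0 * (exp (K * (p - x0)) - 1))"
    using K p b_x0_pos by (intro mult_right_mono) (auto simp: field_simps)
  finally show ?thesis by (simp add: picard_W_def algebra_simps)
qed

lemma picard_iter_bounded:
  obtains B where "\<And>n p. p \<in> {x0..x1} \<Longrightarrow> picard_iter n p \<le> B"
proof -
  obtain Cm Dm where Cm: "\<And>p. p \<in> {x0..x1} \<Longrightarrow> c p \<le> Cm"
    and Dm: "0 \<le> Dm" "\<And>p. p \<in> {x0..x1} \<Longrightarrow> 1 / b p \<le> Dm" by (meson coefficient_bounds)
  define K where "K = 1 + \<bar>Cm\<bar> * Dm"
  have "Cm * Dm \<le> \<bar>Cm\<bar> * Dm" by (rule mult_right_mono[OF abs_ge_self Dm(1)])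
  then have K1: "1 \<le> K" and CmDm: "Cm * Dm \<le> K"
    using Dm(1) by (auto simp: K_def)
  have "K * 1 \<le> K * K" using K1 by (intro mult_left_mono) auto
  with CmDm have "Cm * Dm \<le> K * K" by linarith
  then have K: "0 < K" "Cm * Dm \<le> K^2"
    using K1 CmDm by (simp_all add: power2_eq_square)
  have bound: "picard_iter n p \<le> b x0 * exp (K * (p - x0))" if "p \<in> {x0..x1}" for n p
    using that
  proof (induction n arbitrary: p)
    case (Suc n)
    then show ?case
      using picard_W_exp_bound[OF Cm Dm K continuous_on_picard_iter Suc.IH] by simp
  qed (use K(1) b_x0_pos in simp)
  show ?thesis
  proof (rule that)
    fix n p assume p: "p \<in> {x0..x1}"
    have "picard_iter n p \<le> b x0 * exp (K * (p - x0))" by (rule bound[OF p])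
    also have "\<dots> \<le> b x0 * exp (K * (x1 - x0))"
      using p K(1) b_x0_pos by (auto intro!: mult_left_mono)
    finally show "picard_iter n p \<le> b x0 * exp (K * (x1 - x0))" .
  qed
qed

lemma picard_iter_tendsto: "p \<in> {x0..x1} \<Longrightarrow> (\<lambda>n. picard_iter n p) \<longlonglongrightarrow> picard_limit p"
  unfolding picard_limit_def
  by (rule LIMSEQ_incseq_SUP, rule picard_iter_bounded, rule bdd_aboveI2)
     (auto intro!: incseq_SucI picard_iter_le_Suc)

lemma picard_limit_ge:
  assumes p: "p \<in> {x0..x1}"
  shows "b x0 \<le> picard_limit p"
  by (rule LIMSEQ_le_const[OF picard_iter_tendsto[OF p]]) (use picard_iter_ge[OF p] in blast)

lemma picard_Z_tendsto:
  assumes s: "s \<in> {x0..x1}"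
  shows "(\<lambda>k. picard_Z (picard_iter k) s) \<longlonglongrightarrow> picard_Z picard_limit s"
proof -
  obtain B where B: "\<And>n p. p \<in> {x0..x1} \<Longrightarrow> picard_iter n p \<le> B" using picard_iter_bounded by blast
  show ?thesis
    unfolding picard_Z_def
  proof (rule dominated_convergence(2))
    show "(\<lambda>t. picard_iter k t / b t) integrable_on {x0..s}" for k
      by (intro integrable_on_initial_segment continuous_on_divide_b continuous_on_picard_iter s)
    show "(\<lambda>t. B / b t) integrable_on {x0..s}"
      by (intro integrable_on_initial_segment continuous_on_divide_b continuous_on_const s)
    fix k t assume "t \<in> {x0..s}"
    then have t: "t \<in> {x0..x1}" using s by auto
    show "norm (picard_iter k t / b t) \<le> B / b t"
      using picard_iter_ge[OF t, of k] B[OF t, of k] b_pos[OF t] b_x0_pos by (simp add: divide_right_mono)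
    show "(\<lambda>k. picard_iter k t / b t) \<longlonglongrightarrow> picard_limit t / b t"
      by (intro tendsto_divide picard_iter_tendsto[OF t] tendsto_const) (use b_pos[OF t] in simp)
  qed
qed

lemma flux_integral_tendsto:
  assumes p: "p \<in> {x0..x1}"
  shows "(\<lambda>s. c s * picard_Z picard_limit s) integrable_on {x0..p}"
    and "(\<lambda>k. integral {x0..p} (\<lambda>s. c s * picard_Z (picard_iter k) s))
           \<longlonglongrightarrow> integral {x0..p} (\<lambda>s. c s * picard_Z picard_limit s)"
proof -
  obtain B where B: "\<And>n p. p \<in> {x0..x1} \<Longrightarrow> picard_iter n p \<le> B"
    using picard_iter_bounded by blast
  have dominated: "norm (c t * picard_Z (picard_iter k) t) \<le> c t * picard_Z (\<lambda>_. B) t"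
    if "t \<in> {x0..p}" for k t
  proof -
    have t: "t \<in> {x0..x1}" using that p by auto
    have "0 \<le> picard_iter k t'" if "t' \<in> {x0..x1}" for t'
      using picard_iter_ge[OF that, of k] b_x0_pos by linarith
    then have "0 \<le> picard_Z (picard_iter k) t"
      by (intro picard_Z_nonneg continuous_on_picard_iter t)
    moreover have "picard_Z (picard_iter k) t \<le> picard_Z (\<lambda>_. B) t"
      by (intro picard_Z_mono continuous_on_picard_iter continuous_on_const B t)
    ultimately show ?thesis
      using c_nonneg[OF t] by (simp add: abs_mult mult_left_mono)
  qed
  have converges: "(\<lambda>k. c t * picard_Z (picard_iter k) t) \<longlonglongrightarrow> c t * picard_Z picard_limit t"
    if "t \<in> {x0..p}" for t
    using that p by (intro tendsto_mult tendsto_const picard_Z_tendsto) auto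
  note dc = dominated_convergence[where f="\<lambda>k s. c s * picard_Z (picard_iter k) s"
      and h="\<lambda>s. c s * picard_Z (\<lambda>_. B) s" and g="\<lambda>s. c s * picard_Z picard_limit s", OF
      integrable_flux_integrand[OF continuous_on_picard_iter p]
      integrable_flux_integrand[OF continuous_on_const p] dominated converges]
  show "(\<lambda>s. c s * picard_Z picard_limit s) integrable_on {x0..p}" using dc(1) by simp
  show "(\<lambda>k. integral {x0..p} (\<lambda>s. c s * picard_Z (picard_iter k) s))
           \<longlonglongrightarrow> integral {x0..p} (\<lambda>s. c s * picard_Z picard_limit s)" using dc(2) by simp
qed

lemma picard_limit_fixed_point:
  assumes p: "p \<in> {x0..x1}"
  shows "picard_limit p = picard_W picard_limit p"
proof (rule LIMSEQ_unique)
  show "(\<lambda>k. picard_iter (Suc k) p) \<longlonglongrightarrow> picard_limit p"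
    by (rule LIMSEQ_Suc[OF picard_iter_tendsto[OF p]])
  show "(\<lambda>k. picard_iter (Suc k) p) \<longlonglongrightarrow> picard_W picard_limit p"
    unfolding picard_iter.simps picard_W_def
    by (intro tendsto_add tendsto_const flux_integral_tendsto(2)[OF p])
qed

lemma continuous_on_picard_limit: "continuous_on {x0..x1} picard_limit"
proof -
  have "continuous_on {x0..x1} (picard_W picard_limit)"
    unfolding picard_W_def using flux_integral_tendsto(1)[of x1] interval
    by (intro continuous_on_add continuous_on_const indefinite_integral_continuous_1) auto
  then show ?thesis
    by (rule continuous_on_eq) (simp add: picard_limit_fixed_point)
qed

lemma sl_solution_picard: "sl_solution x0 x1 b c (picard_Z picard_limit) picard_limit"
  unfolding sl_solution_def
proof (intro conjI ballI)
  show "picard_Z picard_limit x0 = 0" by (simp add: picard_Z_def)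
  show "picard_limit x0 = b x0"
    using picard_limit_fixed_point[of x0] interval by (simp add: picard_W_def)
  fix p assume p: "p \<in> {x0..x1}"
  show "(picard_Z picard_limit has_real_derivative picard_limit p / b p) (at p within {x0..x1})"
    unfolding picard_Z_def[abs_def]
    by (rule integral_has_real_derivative[OF continuous_on_divide_b[OF continuous_on_picard_limit] p])
  have "(picard_W picard_limit has_real_derivative c p * picard_Z picard_limit p) (at p within {x0..x1})"
    unfolding picard_W_def[abs_def]
    using integral_has_real_derivative[OF continuous_on_mult[OF continuous_c
        continuous_on_picard_Z[OF continuous_on_picard_limit]] p]
    by (auto intro!: derivative_eq_intros)
  then show "(picard_limit has_real_derivative c p * picard_Z picard_limit p) (at p within {x0..x1})"
    by (rule has_field_derivative_transform_within[where d=1]) (use p picard_limit_fixed_point in auto)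
qed

lemma sl_solution_exists: "\<exists>Z W. sl_solution x0 x1 b c Z W"
  using sl_solution_picard by blast

lemma sl_solution_flux_ge:
  assumes "sl_solution x0 x1 b c Z W" "p \<in> {x0..x1}"
  shows "b x0 \<le> W p"
  using sl_solution_unique[OF assms(1) sl_solution_picard assms(2)] picard_limit_ge[OF assms(2)] by simp

lemma sl_solution_linear_lower_bound:
  assumes sol: "sl_solution x0 x1 b c Z W"
  obtains \<kappa> where "0 < \<kappa>" "\<And>p. p \<in> {x0..x1} \<Longrightarrow> \<kappa> * (p - x0) \<le> Z p"
proof -
  obtain Bb where Bb: "\<And>p. p \<in> {x0..x1} \<Longrightarrow> norm (b p) \<le> Bb"
    using continuous_on_compact_bound[OF compact_Icc continuous_b] by blast
  have x0: "x0 \<in> {x0..x1}" using interval by auto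
  have Bb_pos: "0 < Bb" using Bb[OF x0] b_pos[OF x0] by simp
  have "b x0 / Bb * (p - x0) \<le> Z p" if p: "p \<in> {x0..x1}" for p
  proof -
    have "(Z has_real_derivative W x / b x) (at x within {x0..p})" if "x \<in> {x0..p}" for x
    proof (rule DERIV_subset)
      show "(Z has_real_derivative W x / b x) (at x within {x0..x1})"
        using sol p that unfolding sl_solution_def by auto
    qed (use p in auto)
    then obtain \<xi> where \<xi>: "\<xi> \<in> {x0..p}" "Z p - Z x0 = W \<xi> / b \<xi> * (p - x0)"
      using mvt_real_within[of x0 p Z "\<lambda>x. W x / b x"] p by auto
    then have \<xi>': "\<xi> \<in> {x0..x1}" using p by auto
    have "b x0 / Bb \<le> b x0 / b \<xi>"
      using Bb[OF \<xi>'] b_pos[OF \<xi>'] b_x0_pos by (intro divide_left_mono) auto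
    also have "\<dots> \<le> W \<xi> / b \<xi>"
      using sl_solution_flux_ge[OF sol \<xi>'] b_pos[OF \<xi>'] by (simp add: divide_right_mono)
    finally have "b x0 / Bb * (p - x0) \<le> W \<xi> / b \<xi> * (p - x0)"
      using p by (intro mult_right_mono) auto
    then show ?thesis using \<xi>(2) sol by (simp add: sl_solution_def)
  qed
  then show ?thesis using that[of "b x0 / Bb"] Bb_pos b_x0_pos by simp
qed

lemma sl_solution_pos:
  assumes "sl_solution x0 x1 b c Z W" "p \<in> {x0..x1}" "x0 < p"
  shows "0 < Z p"
proof -
  obtain \<kappa> where "0 < \<kappa>" "\<kappa> * (p - x0) \<le> Z p"
    using sl_solution_linear_lower_bound[OF assms(1)] assms(2) by blast
  moreover have "0 < \<kappa> * (p - x0)" using calculation(1) assms(3) by simp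
  ultimately show ?thesis by linarith
qed

end

section \<open>The Dirichlet principle\<close>

definition admissible :: "real \<Rightarrow> real \<Rightarrow> (real \<Rightarrow> real) \<Rightarrow> (real \<Rightarrow> real) \<Rightarrow> bool" where
  "admissible x0 x1 \<phi> \<phi>' \<longleftrightarrow>
     (\<forall>p\<in>{x0..x1}. (\<phi> has_real_derivative \<phi>' p) (at p within {x0..x1})) \<and>
     continuous_on {x0..x1} \<phi>' \<and> \<phi> x0 = 0 \<and> \<phi> x1 = 1"

definition energy ::
    "real \<Rightarrow> real \<Rightarrow> (real \<Rightarrow> real) \<Rightarrow> (real \<Rightarrow> real) \<Rightarrow> (real \<Rightarrow> real) \<Rightarrow> (real \<Rightarrow> real) \<Rightarrow> real" where
  "energy x0 x1 b c \<phi> \<phi>' = integral {x0..x1} (\<lambda>p. b p * (\<phi>' p)^2 + c p * (\<phi> p)^2)"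

definition min_energy :: "real \<Rightarrow> real \<Rightarrow> (real \<Rightarrow> real) \<Rightarrow> (real \<Rightarrow> real) \<Rightarrow> real" where
  "min_energy x0 x1 b c = Inf {energy x0 x1 b c \<phi> \<phi>' | \<phi> \<phi>'. admissible x0 x1 \<phi> \<phi>'}"

lemma admissible_continuous: "admissible x0 x1 \<phi> \<phi>' \<Longrightarrow> continuous_on {x0..x1} \<phi>"
  unfolding admissible_def by (auto intro: DERIV_continuous_on[where D=\<phi>'])

lemma integrable_energy_density:
  assumes "continuous_on {x0..x1} b" "continuous_on {x0..x1} c" "admissible x0 x1 \<phi> \<phi>'"
  shows "(\<lambda>p. b p * (\<phi>' p)^2 + c p * (\<phi> p)^2) integrable_on {x0..x1}"
  using assms admissible_continuous[OF assms(3)] unfolding admissible_def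
  by (intro integrable_continuous_interval continuous_intros) auto

lemma energy_scale_mono:
  assumes "continuous_on {x0..x1} b" "continuous_on {x0..x1} c"
    and "continuous_on {x0..x1} b'" "continuous_on {x0..x1} c'"
    and adm: "admissible x0 x1 \<phi> \<phi>'"
    and le: "\<And>p. p \<in> {x0..x1} \<Longrightarrow> k * b p \<le> b' p \<and> k * c p \<le> c' p"
  shows "k * energy x0 x1 b c \<phi> \<phi>' \<le> energy x0 x1 b' c' \<phi> \<phi>'"
proof -
  have "k * energy x0 x1 b c \<phi> \<phi>' = integral {x0..x1} (\<lambda>p. k * (b p * (\<phi>' p)^2 + c p * (\<phi> p)^2))"
    by (simp add: energy_def)
  also have "\<dots> \<le> energy x0 x1 b' c' \<phi> \<phi>'"
    unfolding energy_def
  proof (rule integral_le)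
    show "(\<lambda>p. k * (b p * (\<phi>' p)^2 + c p * (\<phi> p)^2)) integrable_on {x0..x1}"
      by (intro integrable_on_mult_right integrable_energy_density assms)
    show "(\<lambda>p. b' p * (\<phi>' p)^2 + c' p * (\<phi> p)^2) integrable_on {x0..x1}"
      by (intro integrable_energy_density assms)
    fix p assume p: "p \<in> {x0..x1}"
    have "k * b p * (\<phi>' p)^2 \<le> b' p * (\<phi>' p)^2" "k * c p * (\<phi> p)^2 \<le> c' p * (\<phi> p)^2"
      using le[OF p] by (simp_all add: mult_right_mono)
    then show "k * (b p * (\<phi>' p)^2 + c p * (\<phi> p)^2) \<le> b' p * (\<phi>' p)^2 + c' p * (\<phi> p)^2"
      by (simp add: algebra_simps)
  qed
  finally show ?thesis .
qed

lemma energy_affine_in_c: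
  assumes "continuous_on {x0..x1} b" "continuous_on {x0..x1} c1" "continuous_on {x0..x1} c2"
    and "admissible x0 x1 \<phi> \<phi>'"
  shows "energy x0 x1 b (\<lambda>p. t * c1 p + (1 - t) * c2 p) \<phi> \<phi>'
       = t * energy x0 x1 b c1 \<phi> \<phi>' + (1 - t) * energy x0 x1 b c2 \<phi> \<phi>'"
proof -
  have "energy x0 x1 b (\<lambda>p. t * c1 p + (1 - t) * c2 p) \<phi> \<phi>'
      = integral {x0..x1} (\<lambda>p. t * (b p * (\<phi>' p)^2 + c1 p * (\<phi> p)^2)
                              + (1 - t) * (b p * (\<phi>' p)^2 + c2 p * (\<phi> p)^2))"
    unfolding energy_def by (rule integral_cong) (simp add: algebra_simps)
  also have "\<dots> = t * energy x0 x1 b c1 \<phi> \<phi>' + (1 - t) * energy x0 x1 b c2 \<phi> \<phi>'"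
    unfolding energy_def
    by (subst integral_add) (auto intro!: integrable_on_mult_right integrable_energy_density assms)
  finally show ?thesis .
qed

text \<open>Since \<open>\<integral> \<phi>' = 1\<close>, expanding \<open>\<integral> (\<phi>' - 1/(x1 - x0))\<^sup>2 \<ge> 0\<close> gives \<open>\<integral> \<phi>'\<^sup>2 \<ge> 1/(x1 - x0)\<close>.\<close>
lemma energy_ge_width:
  assumes "x0 < x1" "continuous_on {x0..x1} b" "continuous_on {x0..x1} c"
    and c_nonneg: "\<And>p. p \<in> {x0..x1} \<Longrightarrow> 0 \<le> c p"
    and B: "0 \<le> B" "\<And>p. p \<in> {x0..x1} \<Longrightarrow> B \<le> b p"
    and adm: "admissible x0 x1 \<phi> \<phi>'"
  shows "B / (x1 - x0) \<le> energy x0 x1 b c \<phi> \<phi>'"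
proof -
  define L where "L = x1 - x0"
  have L: "0 < L" using assms(1) by (simp add: L_def)
  have \<phi>'c: "continuous_on {x0..x1} \<phi>'" using adm by (simp add: admissible_def)
  have "(\<phi>' has_integral (\<phi> x1 - \<phi> x0)) {x0..x1}"
    using assms(1) adm unfolding admissible_def
    by (intro fundamental_theorem_of_calculus) (auto simp: has_real_derivative_iff_has_vector_derivative[symmetric])
  then have int1: "(\<phi>' has_integral 1) {x0..x1}" using adm by (simp add: admissible_def)
  have int2: "(\<lambda>p. (\<phi>' p)^2) integrable_on {x0..x1}"
    by (intro integrable_continuous_interval continuous_intros \<phi>'c)
  define I where "I = integral {x0..x1} (\<lambda>p. (\<phi>' p)^2)"
  have "((\<lambda>p. 1 / L^2) has_integral 1 / L) {x0..x1}"
    using has_integral_const_real[of "1 / L^2" x0 x1] assms(1) L by (simp add: L_def power2_eq_square)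
  from has_integral_add[OF has_integral_diff[OF integrable_integral[OF int2]
      has_integral_mult_right[OF int1, of "2 / L"]] this]
  have "((\<lambda>p. (\<phi>' p - 1 / L)^2) has_integral I - 1 / L) {x0..x1}"
    by (simp add: I_def power2_eq_square algebra_simps)
  then have "0 \<le> I - 1 / L" by (rule has_integral_nonneg) simp
  then have "B / L \<le> B * I"
    using mult_left_mono[OF _ B(1), of "1 / L" I] by simp
  also have "\<dots> = integral {x0..x1} (\<lambda>p. B * (\<phi>' p)^2)" by (simp add: I_def)
  also have "\<dots> \<le> energy x0 x1 b c \<phi> \<phi>'"
    unfolding energy_def
  proof (rule integral_le)
    show "(\<lambda>p. B * (\<phi>' p)^2) integrable_on {x0..x1}" by (rule integrable_on_mult_right[OF int2])
    show "(\<lambda>p. b p * (\<phi>' p)^2 + c p * (\<phi> p)^2) integrable_on {x0..x1}"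
      by (intro integrable_energy_density assms)
    fix p assume p: "p \<in> {x0..x1}"
    have "B * (\<phi>' p)^2 \<le> b p * (\<phi>' p)^2" using B(2)[OF p] by (simp add: mult_right_mono)
    then show "B * (\<phi>' p)^2 \<le> b p * (\<phi>' p)^2 + c p * (\<phi> p)^2"
      using c_nonneg[OF p] by (simp add: add_increasing2)
  qed
  finally show ?thesis by (simp add: L_def)
qed

context sturm_liouville
begin

lemma admissible_slope_bound:
  assumes adm: "admissible x0 x1 \<phi> \<phi>'"
  obtains \<Phi> where "\<And>u. u \<in> {x0..x1} \<Longrightarrow> \<bar>\<phi> u\<bar> \<le> \<Phi> * (u - x0)"
proof -
  have "continuous_on {x0..x1} \<phi>'" using adm by (simp add: admissible_def)
  then obtain \<Phi> where \<Phi>: "\<And>p. p \<in> {x0..x1} \<Longrightarrow> norm (\<phi>' p) \<le> \<Phi>"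
    using continuous_on_compact_bound[OF compact_Icc] by blast
  have "\<bar>\<phi> u\<bar> \<le> \<Phi> * (u - x0)" if u: "u \<in> {x0..x1}" for u
  proof -
    have "(\<phi> has_real_derivative \<phi>' x) (at x within {x0..u})" if "x \<in> {x0..u}" for x
    proof (rule DERIV_subset)
      show "(\<phi> has_real_derivative \<phi>' x) (at x within {x0..x1})"
        using adm u that unfolding admissible_def by auto
    qed (use u in auto)
    then obtain \<xi> where \<xi>: "\<xi> \<in> {x0..u}" "\<phi> u - \<phi> x0 = \<phi>' \<xi> * (u - x0)"
      using mvt_real_within[of x0 u \<phi> \<phi>'] u by auto
    have "\<bar>\<phi>' \<xi>\<bar> * (u - x0) \<le> \<Phi> * (u - x0)"
      using \<Phi>[of \<xi>] \<xi>(1) u by (intro mult_right_mono) auto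
    then show ?thesis using \<xi>(2) adm u by (simp add: admissible_def abs_mult)
  qed
  then show ?thesis by (rule that)
qed

text \<open>Picone's identity: with \<open>H = W \<phi>\<^sup>2 / Z\<close>, the energy density minus \<open>H'\<close> is the square
  \<open>b (\<phi>' - W \<phi> / (b Z))\<^sup>2\<close>, so the energy on \<open>[u, x1]\<close> dominates \<open>H x1 - H u\<close>.\<close>
lemma picone_inequality:
  assumes sol: "sl_solution x0 x1 b c Z W" and adm: "admissible x0 x1 \<phi> \<phi>'"
    and u: "x0 < u" "u \<le> x1"
  shows "W x1 * (\<phi> x1)^2 / Z x1 - W u * (\<phi> u)^2 / Z u \<le> energy x0 x1 b c \<phi> \<phi>'"
proof -
  define H where "H p = W p * (\<phi> p)^2 / Z p" for p
  define H' where "H' p = c p * (\<phi> p)^2 + 2 * W p * \<phi> p * \<phi>' p / Z p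
      - (W p)^2 * (\<phi> p)^2 / (b p * (Z p)^2)" for p
  define f where "f p = b p * (\<phi>' p)^2 + c p * (\<phi> p)^2" for p
  have sub: "{u..x1} \<subseteq> {x0..x1}" using u by auto
  have Zpos: "0 < Z p" if "p \<in> {u..x1}" for p using sl_solution_pos[OF sol] that u by auto
  have "(H' has_integral (H x1 - H u)) {u..x1}"
  proof (rule fundamental_theorem_of_calculus_interior[OF u(2)])
    show "continuous_on {u..x1} H"
      unfolding H_def
      by (intro continuous_intros continuous_on_subset[OF _ sub] sl_solution_continuous[OF sol]
          admissible_continuous[OF adm]) (use Zpos in force)+
    fix x assume x: "x \<in> {u<..<x1}"
    then have xo: "x \<in> {x0<..<x1}" and xi: "x \<in> {x0..x1}" using u by auto
    have "(\<phi> has_real_derivative \<phi>' x) (at x within {x0..x1})"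
      using adm xi unfolding admissible_def by blast
    then have "(\<phi> has_real_derivative \<phi>' x) (at x)"
      by (simp add: at_interior[OF xo])
    then have "(H has_real_derivative H' x) (at x)"
      unfolding H_def[abs_def] H'_def using Zpos[of x] b_pos[OF xi] x
      by (auto intro!: derivative_eq_intros sl_solution_has_derivative_at[OF sol xo]
          simp: field_simps power2_eq_square)
    then show "(H has_vector_derivative H' x) (at x)"
      by (simp add: has_real_derivative_iff_has_vector_derivative)
  qed
  moreover have "H' x \<le> f x" if "x \<in> {u..x1}" for x
  proof -
    have bx: "0 < b x" using b_pos that sub by auto
    have "f x - H' x = b x * (\<phi>' x - W x * \<phi> x / (b x * Z x))^2"
      unfolding f_def H'_def using Zpos[OF that] bx by (simp add: field_simps power2_eq_square)
    moreover have "0 \<le> b x * (\<phi>' x - W x * \<phi> x / (b x * Z x))^2" using bx by simp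
    ultimately show ?thesis by linarith
  qed
  moreover have f_int: "f integrable_on {x0..x1}"
    unfolding f_def by (rule integrable_energy_density[OF continuous_b continuous_c adm])
  ultimately have "H x1 - H u \<le> integral {u..x1} f"
    by (intro has_integral_le[OF _ integrable_integral[OF integrable_on_subinterval[OF f_int sub]]])
  also have "\<dots> \<le> integral {x0..x1} f"
  proof (rule integral_subset_le[OF sub integrable_on_subinterval[OF f_int sub] f_int])
    show "\<forall>p\<in>{x0..x1}. 0 \<le> f p"
    proof
      fix p assume p: "p \<in> {x0..x1}"
      show "0 \<le> f p"
        unfolding f_def by (intro add_nonneg_nonneg mult_nonneg_nonneg) (use b_pos[OF p] c_nonneg[OF p] in auto)
    qed
  qed
  finally show ?thesis by (simp add: H_def f_def[abs_def] energy_def)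
qed

lemma picone_boundary_term_bound:
  assumes sol: "sl_solution x0 x1 b c Z W" and adm: "admissible x0 x1 \<phi> \<phi>'"
  obtains K where "\<And>u. x0 < u \<Longrightarrow> u \<le> x1 \<Longrightarrow> W u * (\<phi> u)^2 / Z u \<le> K * (u - x0)"
proof -
  obtain \<kappa> where \<kappa>: "0 < \<kappa>" "\<And>p. p \<in> {x0..x1} \<Longrightarrow> \<kappa> * (p - x0) \<le> Z p"
    using sl_solution_linear_lower_bound[OF sol] by blast
  obtain Wm where Wm: "\<And>p. p \<in> {x0..x1} \<Longrightarrow> norm (W p) \<le> Wm"
    using continuous_on_compact_bound[OF compact_Icc sl_solution_continuous(2)[OF sol]] by blast
  obtain \<Phi> where \<Phi>: "\<And>u. u \<in> {x0..x1} \<Longrightarrow> \<bar>\<phi> u\<bar> \<le> \<Phi> * (u - x0)"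
    using admissible_slope_bound[OF adm] by blast
  have "W u * (\<phi> u)^2 / Z u \<le> Wm * \<Phi>^2 / \<kappa> * (u - x0)" if u: "x0 < u" "u \<le> x1" for u
  proof -
    have ui: "u \<in> {x0..x1}" using u by auto
    have W: "0 \<le> W u" "W u \<le> Wm"
      using sl_solution_flux_ge[OF sol ui] b_x0_pos Wm[OF ui] by auto
    have "(\<phi> u)^2 \<le> (\<Phi> * (u - x0))^2"
      using \<Phi>[OF ui] by (metis abs_ge_zero power2_abs power_mono)
    then have "W u * (\<phi> u)^2 \<le> Wm * (\<Phi> * (u - x0))^2"
      using W by (intro mult_mono) auto
    moreover have "0 < \<kappa> * (u - x0)" using \<kappa>(1) u by simp
    ultimately have "W u * (\<phi> u)^2 / Z u \<le> Wm * (\<Phi> * (u - x0))^2 / (\<kappa> * (u - x0))"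
      using \<kappa>(2)[OF ui] W by (intro frac_le) auto
    also have "\<dots> = Wm * \<Phi>^2 / \<kappa> * (u - x0)"
      using \<kappa>(1) u by (simp add: field_simps power2_eq_square)
    finally show ?thesis .
  qed
  then show ?thesis by (rule that)
qed

lemma solution_ratio_le_energy:
  assumes sol: "sl_solution x0 x1 b c Z W" and adm: "admissible x0 x1 \<phi> \<phi>'"
  shows "W x1 / Z x1 \<le> energy x0 x1 b c \<phi> \<phi>'"
proof (rule field_le_epsilon)
  fix e :: real assume e: "0 < e"
  obtain K where K: "\<And>u. x0 < u \<Longrightarrow> u \<le> x1 \<Longrightarrow> W u * (\<phi> u)^2 / Z u \<le> K * (u - x0)"
    using picone_boundary_term_bound[OF sol adm] by blast
  define u where "u = x0 + min (x1 - x0) (e / (\<bar>K\<bar> + 1))"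
  have u: "x0 < u" "u \<le> x1" using e interval by (auto simp: u_def)
  have "K * (u - x0) \<le> (\<bar>K\<bar> + 1) * (u - x0)" using u by (intro mult_right_mono) auto
  also have "\<dots> \<le> (\<bar>K\<bar> + 1) * (e / (\<bar>K\<bar> + 1))" by (intro mult_left_mono) (auto simp: u_def)
  finally have "K * (u - x0) \<le> e" by simp
  then show "W x1 / Z x1 \<le> energy x0 x1 b c \<phi> \<phi>' + e"
    using picone_inequality[OF sol adm u] K[OF u] adm by (simp add: admissible_def)
qed

lemma solution_admissible:
  assumes sol: "sl_solution x0 x1 b c Z W"
  shows "admissible x0 x1 (\<lambda>p. Z p / Z x1) (\<lambda>p. W p / (b p * Z x1))"
    and "energy x0 x1 b c (\<lambda>p. Z p / Z x1) (\<lambda>p. W p / (b p * Z x1)) = W x1 / Z x1"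
proof -
  have x1: "x1 \<in> {x0..x1}" using interval by auto
  have Z1: "0 < Z x1" using sl_solution_pos[OF sol x1 interval] .
  show "admissible x0 x1 (\<lambda>p. Z p / Z x1) (\<lambda>p. W p / (b p * Z x1))"
    unfolding admissible_def
  proof (intro conjI ballI)
    fix p assume "p \<in> {x0..x1}"
    then show "((\<lambda>p. Z p / Z x1) has_real_derivative W p / (b p * Z x1)) (at p within {x0..x1})"
      using sol Z1 unfolding sl_solution_def by (auto intro!: derivative_eq_intros)
  next
    show "continuous_on {x0..x1} (\<lambda>p. W p / (b p * Z x1))"
      using b_pos Z1 by (intro continuous_intros sl_solution_continuous[OF sol] continuous_b) force
  qed (use sol Z1 in \<open>auto simp: sl_solution_def\<close>)
  have "((\<lambda>p. c p * Z p * Z p + W p / b p * W p) has_integral W x1 * Z x1 - W x0 * Z x0) {x0..x1}"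
  proof (rule fundamental_theorem_of_calculus[OF less_imp_le[OF interval]])
    fix p assume "p \<in> {x0..x1}"
    then have "(W has_real_derivative c p * Z p) (at p within {x0..x1})"
        "(Z has_real_derivative W p / b p) (at p within {x0..x1})"
      using sol unfolding sl_solution_def by auto
    then have "((\<lambda>p. W p * Z p) has_real_derivative c p * Z p * Z p + W p / b p * W p) (at p within {x0..x1})"
      by (rule DERIV_mult)
    then show "((\<lambda>p. W p * Z p) has_vector_derivative c p * Z p * Z p + W p / b p * W p) (at p within {x0..x1})"
      by (simp add: has_real_derivative_iff_has_vector_derivative)
  qed
  then have "((\<lambda>p. (c p * Z p * Z p + W p / b p * W p) / (Z x1)^2) has_integral
      (W x1 * Z x1 - W x0 * Z x0) / (Z x1)^2) {x0..x1}"
    by (rule has_integral_divide)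
  moreover have "(W x1 * Z x1 - W x0 * Z x0) / (Z x1)^2 = W x1 / Z x1"
    using sol Z1 by (simp add: sl_solution_def power2_eq_square)
  ultimately have "((\<lambda>p. (c p * Z p * Z p + W p / b p * W p) / (Z x1)^2) has_integral W x1 / Z x1) {x0..x1}"
    by simp
  also have "?this \<longleftrightarrow> ((\<lambda>p. b p * (W p / (b p * Z x1))^2 + c p * (Z p / Z x1)^2) has_integral W x1 / Z x1) {x0..x1}"
    using b_pos Z1 by (intro has_integral_cong) (simp add: field_simps power2_eq_square)
  finally show "energy x0 x1 b c (\<lambda>p. Z p / Z x1) (\<lambda>p. W p / (b p * Z x1)) = W x1 / Z x1"
    unfolding energy_def by (rule integral_unique)
qed

lemma min_energy_eq_solution_ratio:
  assumes sol: "sl_solution x0 x1 b c Z W"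
  shows "min_energy x0 x1 b c = W x1 / Z x1"
  unfolding min_energy_def
proof (rule cInf_eq_minimum)
  show "W x1 / Z x1 \<in> {energy x0 x1 b c \<phi> \<phi>' | \<phi> \<phi>'. admissible x0 x1 \<phi> \<phi>'}"
    using solution_admissible[OF sol] by force
qed (use solution_ratio_le_energy[OF sol] in blast)

lemma min_energy_le_energy:
  assumes "admissible x0 x1 \<phi> \<phi>'"
  shows "min_energy x0 x1 b c \<le> energy x0 x1 b c \<phi> \<phi>'"
proof -
  obtain Z W where sol: "sl_solution x0 x1 b c Z W" using sl_solution_exists by blast
  show ?thesis
    using solution_ratio_le_energy[OF sol assms] by (simp add: min_energy_eq_solution_ratio[OF sol])
qed

lemma min_energy_attained:
  obtains \<phi> \<phi>' where "admissible x0 x1 \<phi> \<phi>'" "energy x0 x1 b c \<phi> \<phi>' = min_energy x0 x1 b c"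
proof -
  obtain Z W where sol: "sl_solution x0 x1 b c Z W" using sl_solution_exists by blast
  show ?thesis
    using solution_admissible[OF sol] min_energy_eq_solution_ratio[OF sol] that by simp
qed

lemma min_energy_pos: "0 < min_energy x0 x1 b c"
proof -
  obtain Z W where sol: "sl_solution x0 x1 b c Z W" using sl_solution_exists by blast
  have x1: "x1 \<in> {x0..x1}" using interval by auto
  have "0 < W x1" using sl_solution_flux_ge[OF sol x1] b_x0_pos by linarith
  then show ?thesis
    using sl_solution_pos[OF sol x1 interval] min_energy_eq_solution_ratio[OF sol] by simp
qed

end

lemma min_energy_scale_mono:
  assumes "sturm_liouville x0 x1 b c" "sturm_liouville x0 x1 b' c'" and k: "0 \<le> k"
    and le: "\<And>p. p \<in> {x0..x1} \<Longrightarrow> k * b p \<le> b' p \<and> k * c p \<le> c' p"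
  shows "k * min_energy x0 x1 b c \<le> min_energy x0 x1 b' c'"
proof -
  interpret sl: sturm_liouville x0 x1 b c by fact
  interpret sl': sturm_liouville x0 x1 b' c' by fact
  obtain \<phi> \<phi>' where adm: "admissible x0 x1 \<phi> \<phi>'"
    and min: "energy x0 x1 b' c' \<phi> \<phi>' = min_energy x0 x1 b' c'"
    by (rule sl'.min_energy_attained)
  have "k * min_energy x0 x1 b c \<le> k * energy x0 x1 b c \<phi> \<phi>'"
    by (rule mult_left_mono[OF sl.min_energy_le_energy[OF adm] k])
  also have "\<dots> \<le> energy x0 x1 b' c' \<phi> \<phi>'"
    by (rule energy_scale_mono[OF sl.continuous_b sl.continuous_c sl'.continuous_b sl'.continuous_c adm le])
  finally show ?thesis using min by simp
qed

lemma min_energy_concave_in_c: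
  assumes "sturm_liouville x0 x1 b c1" "sturm_liouville x0 x1 b c2" "sturm_liouville x0 x1 b c"
    and c: "\<And>p. p \<in> {x0..x1} \<Longrightarrow> c p = t * c1 p + (1 - t) * c2 p" and t: "0 \<le> t" "t \<le> 1"
  shows "t * min_energy x0 x1 b c1 + (1 - t) * min_energy x0 x1 b c2 \<le> min_energy x0 x1 b c"
proof -
  interpret sl1: sturm_liouville x0 x1 b c1 by fact
  interpret sl2: sturm_liouville x0 x1 b c2 by fact
  interpret sl: sturm_liouville x0 x1 b c by fact
  obtain \<phi> \<phi>' where adm: "admissible x0 x1 \<phi> \<phi>'"
    and min: "energy x0 x1 b c \<phi> \<phi>' = min_energy x0 x1 b c"
    by (rule sl.min_energy_attained)
  have "t * min_energy x0 x1 b c1 + (1 - t) * min_energy x0 x1 b c2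
      \<le> t * energy x0 x1 b c1 \<phi> \<phi>' + (1 - t) * energy x0 x1 b c2 \<phi> \<phi>'"
    using t by (intro add_mono mult_left_mono sl1.min_energy_le_energy sl2.min_energy_le_energy adm) auto
  also have "\<dots> = energy x0 x1 b (\<lambda>p. t * c1 p + (1 - t) * c2 p) \<phi> \<phi>'"
    by (rule energy_affine_in_c[OF sl.continuous_b sl1.continuous_c sl2.continuous_c adm, symmetric])
  also have "\<dots> = energy x0 x1 b c \<phi> \<phi>'"
    unfolding energy_def by (rule integral_cong) (simp add: c)
  finally show ?thesis using min by simp
qed

lemma min_energy_ge_width:
  assumes "sturm_liouville x0 x1 b c" and B: "0 \<le> B" "\<And>p. p \<in> {x0..x1} \<Longrightarrow> B \<le> b p"
  shows "B / (x1 - x0) \<le> min_energy x0 x1 b c"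
proof -
  interpret sturm_liouville x0 x1 b c by fact
  obtain \<phi> \<phi>' where adm: "admissible x0 x1 \<phi> \<phi>'"
    and min: "energy x0 x1 b c \<phi> \<phi>' = min_energy x0 x1 b c"
    by (rule min_energy_attained)
  show ?thesis
    using energy_ge_width[OF interval continuous_b continuous_c c_nonneg B adm] min by simp
qed

section \<open>The relative stream function and \<open>\<lambda>\<^sub>0\<close>\<close>

lemma continuous_on_if_holder_on:
  assumes "0 < \<alpha>" "holder_on \<alpha> S f"
  shows "continuous_on S f"
  unfolding continuous_on_def
proof
  fix x assume x: "x \<in> S"
  obtain C where C: "\<forall>x\<in>S. \<forall>y\<in>S. \<bar>f x - f y\<bar> \<le> C * \<bar>x - y\<bar> powr \<alpha>"
    using assms(2) by (auto simp: holder_on_def)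
  have "((\<lambda>y. y - x) \<longlongrightarrow> 0) (at x within S)"
    by (rule LIM_zero[OF tendsto_ident_at])
  then have "((\<lambda>y. \<bar>y - x\<bar>) \<longlongrightarrow> 0) (at x within S)"
    by (rule tendsto_rabs_zero)
  then have "((\<lambda>y. \<bar>y - x\<bar> powr \<alpha>) \<longlongrightarrow> 0) (at x within S)"
    by (rule tendsto_zero_powrI[OF _ tendsto_const]) (simp_all add: assms(1))
  then have lim: "((\<lambda>y. C * \<bar>y - x\<bar> powr \<alpha>) \<longlongrightarrow> 0) (at x within S)"
    by (rule tendsto_mult_right_zero)
  have bound: "\<bar>f y - f x\<bar> \<le> C * \<bar>y - x\<bar> powr \<alpha>" if "y \<in> S" for y
    using C x that by blast
  have "\<forall>\<^sub>F y in at x within S. norm (f y - f x) \<le> C * \<bar>y - x\<bar> powr \<alpha>"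
    unfolding eventually_at_topological by (intro exI[of _ UNIV]) (simp add: bound)
  from Lim_null_comparison[OF this lim] show "(f \<longlongrightarrow> f x) (at x within S)"
    by (rule LIM_zero_cancel)
qed

lemma sqrt_stretch_lower:
  fixes A U t :: real
  assumes "0 < A" "A \<le> U" "0 \<le> t"
  shows "sqrt (1 + t / U) * sqrt A \<le> sqrt (A + t)"
proof -
  have "t * A / U \<le> t" using assms by (simp add: divide_le_eq mult_left_mono)
  then have "(1 + t / U) * A \<le> A + t" by (simp add: algebra_simps)
  then have "sqrt ((1 + t / U) * A) \<le> sqrt (A + t)" by (rule real_sqrt_le_mono)
  then show ?thesis by (simp add: real_sqrt_mult)
qed

lemma sqrt_stretch_upper:
  fixes A d t :: real
  assumes "0 < d" "d \<le> A" "0 \<le> t"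
  shows "sqrt (A + t) \<le> sqrt (1 + t / d) * sqrt A"
proof -
  have "t \<le> t * A / d" using assms by (simp add: le_divide_eq mult_left_mono)
  then have "A + t \<le> (1 + t / d) * A" by (simp add: algebra_simps)
  then have "sqrt (A + t) \<le> sqrt ((1 + t / d) * A)" by (rule real_sqrt_le_mono)
  then show ?thesis by (simp add: real_sqrt_mult)
qed

lemma lipschitz_on_real_ordered_pairs:
  fixes f :: "real \<Rightarrow> real"
  assumes "0 \<le> L" and "\<And>x y. x \<in> S \<Longrightarrow> y \<in> S \<Longrightarrow> x \<le> y \<Longrightarrow> \<bar>f y - f x\<bar> \<le> L * (y - x)"
  shows "L-lipschitz_on S f"
proof (rule lipschitz_onI[OF _ assms(1)])
  fix x y assume "x \<in> S" "y \<in> S"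
  then show "dist (f x) (f y) \<le> L * dist x y"
    using assms(2)[of x y] assms(2)[of y x] by (cases "x \<le> y") (auto simp: dist_real_def abs_minus_commute)
qed

lemma lipschitz_on_if_stretch_bound:
  fixes f :: "real \<Rightarrow> real"
  assumes d: "0 < d" and B: "0 \<le> B" and ab: "a \<le> b"
    and bound: "\<And>x y. a \<le> x \<Longrightarrow> x \<le> y \<Longrightarrow> y \<le> b \<Longrightarrow> \<bar>f y - f x\<bar> \<le> ((1 + (y - x) / d)^2 - 1) * B"
  shows "(B * (2 + (b - a) / d) / d)-lipschitz_on {a..b} f"
proof (rule lipschitz_on_real_ordered_pairs)
  show "0 \<le> B * (2 + (b - a) / d) / d" using d B ab by simp
  fix x y assume xy: "x \<in> {a..b}" "y \<in> {a..b}" "x \<le> y"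
  have "(1 + (y - x) / d)^2 - 1 = (y - x) / d * (2 + (y - x) / d)"
    by (simp add: power2_eq_square algebra_simps)
  also have "\<dots> \<le> (y - x) / d * (2 + (b - a) / d)"
    using xy d by (intro mult_left_mono add_left_mono divide_right_mono) auto
  finally have "((1 + (y - x) / d)^2 - 1) * B \<le> (y - x) / d * (2 + (b - a) / d) * B"
    using B by (rule mult_right_mono)
  also have "\<dots> = B * (2 + (b - a) / d) / d * (y - x)" by simp
  finally show "\<bar>f y - f x\<bar> \<le> B * (2 + (b - a) / d) / d * (y - x)"
    using bound[of x y] xy by auto
qed

lemma cube_stretch_lower:
  fixes r x y :: real
  assumes "1 \<le> r" "0 \<le> x" "r * x \<le> y"
  shows "r * x^3 \<le> y^3"
proof -
  have "r * x^3 \<le> r^3 * x^3"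
    using assms(1,2) by (intro mult_right_mono) (auto simp: power_increasing[of 1 3 r, simplified])
  also have "\<dots> = (r * x)^3" by (simp add: power_mult_distrib)
  also have "\<dots> \<le> y^3" using assms by (intro power_mono) auto
  finally show ?thesis .
qed

lemma cube_stretch_upper:
  fixes r x y :: real
  assumes "1 \<le> r" "0 \<le> y" "y \<le> r * x"
  shows "y^3 \<le> r^4 * x^3" "y \<le> r^4 * x"
proof -
  have "0 \<le> r * x" using assms by linarith
  then have x: "0 \<le> x" using assms(1) by (simp add: zero_le_mult_iff)
  have "r^3 \<le> r^4" "r \<le> r^4"
    using power_increasing[of 3 4 r] power_increasing[of 1 4 r] assms(1) by auto
  have "y^3 \<le> (r * x)^3" using assms by (intro power_mono) auto
  also have "\<dots> = r^3 * x^3" by (simp add: power_mult_distrib)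
  also have "\<dots> \<le> r^4 * x^3" using \<open>r^3 \<le> r^4\<close> x by (intro mult_right_mono) auto
  finally show "y^3 \<le> r^4 * x^3" .
  show "y \<le> r^4 * x" using assms(3) \<open>r \<le> r^4\<close> x by (smt (verit) mult_right_mono)
qed

lemma powr_three_halves: "0 < (l::real) \<Longrightarrow> l powr (3/2) = sqrt l ^ 3"
  by (simp add: powr_half_sqrt[symmetric] powr_realpow[symmetric] powr_powr)

locale piecewise_vorticity =
  fixes g \<sigma> p0 p1 \<alpha> :: real and \<gamma>1 \<gamma>2 :: "real \<Rightarrow> real"
  assumes g_pos: "0 < g" and \<sigma>_pos: "0 < \<sigma>" and p0_p1: "p0 < p1" and p1_neg: "p1 < 0"
    and \<alpha>_pos: "0 < \<alpha>"
    and holder1: "holder_on \<alpha> {p0..p1} \<gamma>1" and holder2: "holder_on \<alpha> {p1..0} \<gamma>2"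
begin

abbreviation "\<gamma> \<equiv> gam p1 \<gamma>1 \<gamma>2"
abbreviation "\<Gamma> \<equiv> Gam \<gamma>"

lemma p0_neg: "p0 < 0"
  using p0_p1 p1_neg by simp

lemma gam_bounded: "\<exists>B>0. \<forall>p\<in>{p0..0}. \<bar>\<gamma> p\<bar> \<le> B"
proof -
  obtain B1 where B1: "\<And>x. x \<in> {p0..p1} \<Longrightarrow> norm (\<gamma>1 x) \<le> B1"
    using continuous_on_compact_bound[OF compact_Icc continuous_on_if_holder_on[OF \<alpha>_pos holder1]] by blast
  obtain B2 where B2: "\<And>x. x \<in> {p1..0} \<Longrightarrow> norm (\<gamma>2 x) \<le> B2"
    using continuous_on_compact_bound[OF compact_Icc continuous_on_if_holder_on[OF \<alpha>_pos holder2]] by blast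
  have "\<bar>\<gamma> p\<bar> \<le> \<bar>B1\<bar> + \<bar>B2\<bar> + 1" if "p \<in> {p0..0}" for p
    using B1[of p] B2[of p] that by (cases "p < p1") (auto simp: gam_def)
  then show ?thesis by (intro exI[of _ "\<bar>B1\<bar> + \<bar>B2\<bar> + 1"]) auto
qed

definition gam_bound :: real where
  "gam_bound = (SOME B. 0 < B \<and> (\<forall>p\<in>{p0..0}. \<bar>\<gamma> p\<bar> \<le> B))"

lemma gam_bound: "0 < gam_bound" "\<And>p. p \<in> {p0..0} \<Longrightarrow> \<bar>\<gamma> p\<bar> \<le> gam_bound"
  using someI_ex[OF gam_bounded] unfolding gam_bound_def by auto

lemma gam_integrable: "\<gamma> integrable_on {p0..0}"
proof (rule Henstock_Kurzweil_Integration.integrable_combine[where c=p1])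
  show "p0 \<le> p1" "p1 \<le> 0" using p0_p1 p1_neg by auto
  show "\<gamma> integrable_on {p0..p1}"
    by (rule integrable_spike_finite[where S="{p1}" and f=\<gamma>1])
       (auto simp: gam_def intro!: integrable_continuous_interval continuous_on_if_holder_on[OF \<alpha>_pos holder1])
  show "\<gamma> integrable_on {p1..0}"
    by (rule integrable_spike_finite[where S="{}" and f=\<gamma>2])
       (auto simp: gam_def intro!: integrable_continuous_interval continuous_on_if_holder_on[OF \<alpha>_pos holder2])
qed

lemma Gam_diff: "p0 \<le> p \<Longrightarrow> p \<le> q \<Longrightarrow> q \<le> 0 \<Longrightarrow> \<Gamma> q - \<Gamma> p = integral {p..q} \<gamma>"
proof -
  assume pq: "p0 \<le> p" "p \<le> q" "q \<le> 0"
  have "integral {p..q} \<gamma> + integral {q..0} \<gamma> = integral {p..0} \<gamma>"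
    using pq by (intro Henstock_Kurzweil_Integration.integral_combine integrable_subinterval_real[OF gam_integrable]) auto
  moreover have "\<Gamma> r = - integral {r..0} \<gamma>" if "r \<le> 0" for r
    using that by (cases "r = 0") (auto simp: Gam_def)
  ultimately show ?thesis using pq by simp
qed

lemma Gam_lipschitz: "gam_bound-lipschitz_on {p0..0} \<Gamma>"
proof (rule lipschitz_on_real_ordered_pairs)
  show "0 \<le> gam_bound" using gam_bound(1) by simp
  fix p q assume pq: "p \<in> {p0..0}" "q \<in> {p0..0}" "p \<le> q"
  have i: "\<gamma> integrable_on {p..q}" using pq by (intro integrable_subinterval_real[OF gam_integrable]) auto
  have bound: "- gam_bound \<le> \<gamma> x \<and> \<gamma> x \<le> gam_bound" if "x \<in> {p..q}" for x
    using gam_bound(2)[of x] pq that by (auto simp: abs_le_iff)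
  have "integral {p..q} \<gamma> \<le> integral {p..q} (\<lambda>_. gam_bound)"
    using bound by (intro integral_le[OF i]) auto
  moreover have "integral {p..q} (\<lambda>_. - gam_bound) \<le> integral {p..q} \<gamma>"
    using bound by (intro integral_le[OF _ i]) auto
  ultimately have "\<bar>integral {p..q} \<gamma>\<bar> \<le> gam_bound * (q - p)"
    using pq by (simp add: abs_le_iff algebra_simps)
  then show "\<bar>\<Gamma> q - \<Gamma> p\<bar> \<le> gam_bound * (q - p)" using Gam_diff pq by simp
qed

lemma Gam_continuous: "continuous_on {p0..0} \<Gamma>"
  by (rule lipschitz_on_continuous_on[OF Gam_lipschitz])

lemma Gam_lower: "p \<in> {p0..0} \<Longrightarrow> - (gam_bound * (- p0)) \<le> \<Gamma> p"
proof -
  assume p: "p \<in> {p0..0}"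
  have "dist (\<Gamma> 0) (\<Gamma> p) \<le> gam_bound * dist 0 p"
    using p p0_neg by (intro lipschitz_onD[OF Gam_lipschitz]) auto
  then have "\<bar>\<Gamma> 0 - \<Gamma> p\<bar> \<le> gam_bound * \<bar>0 - p\<bar>" by (simp add: dist_real_def)
  moreover have "gam_bound * \<bar>0 - p\<bar> \<le> gam_bound * (- p0)"
    using p gam_bound(1) by (intro mult_left_mono) auto
  ultimately show ?thesis by (simp add: Gam_def)
qed

definition Gam_max :: real where
  "Gam_max = Sup (\<Gamma> ` {p0..0})"

lemma Gam_max_attained: obtains ps where "ps \<in> {p0..0}" "\<Gamma> ps = Gam_max"
proof -
  obtain ps where ps: "ps \<in> {p0..0}" "\<forall>y\<in>{p0..0}. \<Gamma> y \<le> \<Gamma> ps"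
    using continuous_attains_sup[OF compact_Icc _ Gam_continuous] p0_neg by auto
  then have "Gam_max = \<Gamma> ps" unfolding Gam_max_def by (intro cSup_eq_maximum) auto
  then show ?thesis using that ps(1) by simp
qed

lemma Gam_le_max: "p \<in> {p0..0} \<Longrightarrow> \<Gamma> p \<le> Gam_max"
  unfolding Gam_max_def
  by (rule cSup_upper) (auto intro!: bounded_imp_bdd_above compact_imp_bounded
      compact_continuous_image Gam_continuous)

lemma Gam_max_nonneg: "0 \<le> Gam_max"
  using Gam_le_max[of 0] p0_neg by (simp add: Gam_def)

definition inv_cube_integral :: "real \<Rightarrow> real" where
  "inv_cube_integral l = integral {p0..0} (\<lambda>p. 1 / aa \<gamma> l p ^ 3)"

lemma radicand_bounds:
  assumes "p \<in> {p0..0}"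
  shows "l - 2 * Gam_max \<le> l - 2 * \<Gamma> p" "l - 2 * \<Gamma> p \<le> l + 2 * gam_bound * (- p0)"
  using Gam_le_max[OF assms] Gam_lower[OF assms] by auto

lemma aa_pos: "2 * Gam_max < l \<Longrightarrow> p \<in> {p0..0} \<Longrightarrow> 0 < aa \<gamma> l p"
  unfolding aa_def using radicand_bounds(1)[of p l] by simp

lemma continuous_on_aa: "continuous_on {p0..0} (aa \<gamma> l)"
  unfolding aa_def[abs_def] by (intro continuous_intros Gam_continuous)

lemma continuous_on_inv_cube: "2 * Gam_max < l \<Longrightarrow> continuous_on {p0..0} (\<lambda>p. 1 / aa \<gamma> l p ^ 3)"
  by (intro continuous_intros continuous_on_aa) (use aa_pos in force)

lemma integrable_inv_cube: "2 * Gam_max < l \<Longrightarrow> (\<lambda>p. 1 / aa \<gamma> l p ^ 3) integrable_on {p0..0}"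
  by (rule integrable_continuous_interval[OF continuous_on_inv_cube])

lemma aa_stretch_lower:
  assumes l: "2 * Gam_max < l" "l \<le> l'" and p: "p \<in> {p0..0}"
  shows "sqrt (1 + (l' - l) / (l + 2 * gam_bound * (- p0))) * aa \<gamma> l p \<le> aa \<gamma> l' p"
  using sqrt_stretch_lower[of "l - 2 * \<Gamma> p" "l + 2 * gam_bound * (- p0)" "l' - l"]
    radicand_bounds[OF p, of l] l by (simp add: aa_def)

lemma aa_stretch_upper:
  assumes l: "2 * Gam_max < l1" "l1 \<le> l" "l \<le> l'" and p: "p \<in> {p0..0}"
  shows "aa \<gamma> l' p \<le> sqrt (1 + (l' - l) / (l1 - 2 * Gam_max)) * aa \<gamma> l p"
  using sqrt_stretch_upper[of "l1 - 2 * Gam_max" "l - 2 * \<Gamma> p" "l' - l"]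
    radicand_bounds[OF p, of l] l by (simp add: aa_def)

lemma radicand_upper_pos: "2 * Gam_max < l \<Longrightarrow> 0 < l + 2 * gam_bound * (- p0)"
  using Gam_max_nonneg mult_pos_pos[OF gam_bound(1), of "- p0"] p0_neg by linarith

lemma inv_cube_integral_pos:
  assumes l: "2 * Gam_max < l"
  shows "0 < inv_cube_integral l"
proof -
  define s where "s = sqrt (l + 2 * gam_bound * (- p0))"
  have s: "0 < s" using radicand_upper_pos[OF l] by (simp add: s_def)
  have "integral {p0..0} (\<lambda>p. 1 / s ^ 3) \<le> inv_cube_integral l"
    unfolding inv_cube_integral_def
  proof (rule integral_le[OF integrable_const_ivl integrable_inv_cube[OF l]])
    fix p assume p: "p \<in> {p0..0}"
    have "aa \<gamma> l p \<le> s" unfolding aa_def s_def using radicand_bounds(2)[OF p, of l] by simp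
    then show "1 / s ^ 3 \<le> 1 / aa \<gamma> l p ^ 3"
      using aa_pos[OF l p] by (intro divide_left_mono mult_pos_pos power_mono) auto
  qed
  moreover have "0 < integral {p0..0} (\<lambda>p. 1 / s ^ 3)" using p0_neg s by (simp add: divide_neg_pos)
  ultimately show ?thesis by linarith
qed

lemma inv_cube_integral_strict_antimono:
  assumes l: "2 * Gam_max < l" "l < l'"
  shows "inv_cube_integral l' < inv_cube_integral l"
proof -
  define r where "r = sqrt (1 + (l' - l) / (l + 2 * gam_bound * (- p0)))"
  have r: "1 < r" using radicand_upper_pos[OF l(1)] l by (simp add: r_def)
  have "inv_cube_integral l' \<le> integral {p0..0} (\<lambda>p. 1 / r * (1 / aa \<gamma> l p ^ 3))"
    unfolding inv_cube_integral_def
  proof (rule integral_le[OF integrable_inv_cube integrable_on_mult_right[OF integrable_inv_cube[OF l(1)]]])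
    show "2 * Gam_max < l'" using l by simp
    fix p assume p: "p \<in> {p0..0}"
    have "r * aa \<gamma> l p ^ 3 \<le> aa \<gamma> l' p ^ 3"
      using aa_stretch_lower[OF l(1) less_imp_le[OF l(2)] p] aa_pos[OF l(1) p] r
      by (intro cube_stretch_lower) (auto simp: r_def)
    moreover have "0 < aa \<gamma> l' p" using l by (intro aa_pos p) auto
    ultimately show "1 / aa \<gamma> l' p ^ 3 \<le> 1 / r * (1 / aa \<gamma> l p ^ 3)"
      using aa_pos[OF l(1) p] r by (simp add: divide_simps mult.commute)
  qed
  also have "\<dots> = 1 / r * inv_cube_integral l"
    unfolding inv_cube_integral_def by (rule integral_mult_right)
  also have "\<dots> < inv_cube_integral l" using inv_cube_integral_pos[OF l(1)] r by (simp add: divide_less_eq)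
  finally show ?thesis .
qed

lemma inv_cube_integral_antimono: "2 * Gam_max < l \<Longrightarrow> l \<le> l' \<Longrightarrow> inv_cube_integral l' \<le> inv_cube_integral l"
  using inv_cube_integral_strict_antimono by (cases "l = l'") (auto intro: less_imp_le)

lemma inv_cube_integral_stretch:
  assumes l: "2 * Gam_max < l1" "l1 \<le> l" "l \<le> l'"
  shows "inv_cube_integral l \<le> (1 + (l' - l) / (l1 - 2 * Gam_max))^2 * inv_cube_integral l'"
proof -
  define R where "R = 1 + (l' - l) / (l1 - 2 * Gam_max)"
  have R: "1 \<le> R" using l by (simp add: R_def)
  have l': "2 * Gam_max < l" "2 * Gam_max < l'" using l by auto
  have "inv_cube_integral l \<le> integral {p0..0} (\<lambda>p. R^2 * (1 / aa \<gamma> l' p ^ 3))"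
    unfolding inv_cube_integral_def
  proof (rule integral_le[OF integrable_inv_cube[OF l'(1)] integrable_on_mult_right[OF integrable_inv_cube[OF l'(2)]]])
    fix p assume p: "p \<in> {p0..0}"
    have "aa \<gamma> l' p ^ 3 \<le> sqrt R ^ 4 * aa \<gamma> l p ^ 3"
      using aa_stretch_upper[OF l p] aa_pos[OF l'(2) p] R
      by (intro cube_stretch_upper) (auto simp: R_def)
    also have "sqrt R ^ 4 = (sqrt R ^ 2)^2" by (simp flip: power_mult)
    also have "\<dots> = R^2" using R by simp
    finally show "1 / aa \<gamma> l p ^ 3 \<le> R^2 * (1 / aa \<gamma> l' p ^ 3)"
      using aa_pos[OF l'(1) p] aa_pos[OF l'(2) p] R by (simp add: divide_simps mult.commute)
  qed
  also have "\<dots> = R^2 * inv_cube_integral l'"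
    unfolding inv_cube_integral_def by (rule integral_mult_right)
  finally show ?thesis by (simp add: R_def)
qed

lemma continuous_on_inv_cube_integral:
  assumes l1: "2 * Gam_max < l1"
  shows "continuous_on {l1..l2} inv_cube_integral"
proof (cases "l1 \<le> l2")
  case True
  have "\<bar>inv_cube_integral y - inv_cube_integral x\<bar>
      \<le> ((1 + (y - x) / (l1 - 2 * Gam_max))^2 - 1) * inv_cube_integral l1"
    if "l1 \<le> x" "x \<le> y" "y \<le> l2" for x y
  proof -
    define R where "R = 1 + (y - x) / (l1 - 2 * Gam_max)"
    have R: "1 \<le> R^2" using that l1 by (simp add: R_def)
    have "inv_cube_integral x \<le> R^2 * inv_cube_integral y"
      using inv_cube_integral_stretch[OF l1 that(1,2)] by (simp add: R_def)
    moreover have "inv_cube_integral y \<le> inv_cube_integral x" "inv_cube_integral y \<le> inv_cube_integral l1"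
      using l1 that by (auto intro: inv_cube_integral_antimono)
    ultimately have "\<bar>inv_cube_integral y - inv_cube_integral x\<bar> \<le> (R^2 - 1) * inv_cube_integral y"
      by (simp add: algebra_simps)
    also have "\<dots> \<le> (R^2 - 1) * inv_cube_integral l1"
      using R \<open>inv_cube_integral y \<le> inv_cube_integral l1\<close> by (intro mult_left_mono) auto
    finally show ?thesis by (simp add: R_def)
  qed
  from lipschitz_on_if_stretch_bound[OF _ _ True this] show ?thesis
    using l1 inv_cube_integral_pos[OF l1] by (intro lipschitz_on_continuous_on) auto
qed simp

text \<open>Near a maximum point of \<open>\<Gamma>\<close> the Lipschitz bound keeps \<open>a\<^sup>2 \<le> 2 \<epsilon>\<close> on an interval
  of length \<open>\<epsilon> / (2 B)\<close> when \<open>\<lambda> = 2 max \<Gamma> + \<epsilon>\<close>, so the integral is at least \<open>1 / (4 B sqrt (2 \<epsilon>))\<close>.\<close>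
lemma inv_cube_integral_exceeds: "\<exists>l. 2 * Gam_max < l \<and> 1 / g < inv_cube_integral l"
proof -
  obtain ps where ps: "ps \<in> {p0..0}" "\<Gamma> ps = Gam_max" by (rule Gam_max_attained)
  define B where "B = gam_bound"
  have B: "0 < B" using gam_bound(1) by (simp add: B_def)
  define \<epsilon> where "\<epsilon> = min (B * (- p0)) (g^2 / (64 * B^2))"
  have e0: "0 < \<epsilon>" using B p0_neg g_pos by (simp add: \<epsilon>_def mult_pos_neg)
  have e1: "\<epsilon> \<le> B * (- p0)" "\<epsilon> \<le> g^2 / (64 * B^2)" by (auto simp: \<epsilon>_def)
  define l where "l = 2 * Gam_max + \<epsilon>"
  have l: "2 * Gam_max < l" using e0 by (simp add: l_def)
  define h where "h = \<epsilon> / (2 * B)"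
  have h: "0 < h" "h \<le> - p0" using e0 e1(1) B p0_neg by (auto simp: h_def field_simps)
  define u where "u = max p0 (ps - h)"
  define v where "v = min 0 (ps + h)"
  have uv: "h \<le> v - u" using ps(1) h by (auto simp: u_def v_def min_def max_def)
  have J: "{u..v} \<subseteq> {p0..0}" by (auto simp: u_def v_def)
  define s where "s = sqrt (2 * \<epsilon>)"
  have s: "0 < s" "s^2 = 2 * \<epsilon>" using e0 by (auto simp: s_def)
  have bound: "1 / s ^ 3 \<le> 1 / aa \<gamma> l p ^ 3" if p: "p \<in> {u..v}" for p
  proof -
    have pI: "p \<in> {p0..0}" using J p by auto
    have "Gam_max - \<Gamma> p \<le> dist (\<Gamma> ps) (\<Gamma> p)" using ps(2) by (simp add: dist_real_def)
    also have "\<dots> \<le> B * dist ps p"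
      unfolding B_def by (rule lipschitz_onD[OF Gam_lipschitz ps(1) pI])
    also have "\<dots> \<le> B * h" using B p by (intro mult_left_mono) (auto simp: dist_real_def u_def v_def)
    finally have "Gam_max - \<Gamma> p \<le> B * h" .
    then have "l - 2 * \<Gamma> p \<le> 2 * \<epsilon>" using B by (simp add: l_def h_def field_simps)
    then have "aa \<gamma> l p \<le> s" by (simp add: aa_def s_def)
    then show ?thesis using aa_pos[OF l pI] s by (intro divide_left_mono mult_pos_pos power_mono) auto
  qed
  have "h / s ^ 3 \<le> (v - u) / s ^ 3" using uv s by (simp add: divide_right_mono)
  also have "\<dots> = integral {u..v} (\<lambda>p. 1 / s ^ 3)" using uv h by simp
  also have "\<dots> \<le> integral {u..v} (\<lambda>p. 1 / aa \<gamma> l p ^ 3)"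
    using bound by (intro integral_le integrable_continuous_interval
        continuous_on_subset[OF continuous_on_inv_cube[OF l] J]) auto
  also have "\<dots> \<le> inv_cube_integral l"
    unfolding inv_cube_integral_def using aa_pos[OF l]
    by (intro integral_subset_le[OF J] integrable_inv_cube[OF l] integrable_continuous_interval
        continuous_on_subset[OF continuous_on_inv_cube[OF l] J]) (auto intro: less_imp_le)
  finally have "h / s ^ 3 \<le> inv_cube_integral l" .
  moreover have "h / s ^ 3 = 1 / (4 * B * s)"
  proof -
    have "s ^ 3 = s * (2 * \<epsilon>)" using s(2) by (simp add: power2_eq_square power3_eq_cube)
    then show ?thesis using e0 s B by (simp add: h_def field_simps)
  qed
  moreover have "1 / g < 1 / (4 * B * s)"
  proof -
    have "\<epsilon> * (B^2 * 64) \<le> g^2" using e1(2) B by (simp add: field_simps)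
    moreover have "0 < \<epsilon> * B^2" using e0 B by simp
    ultimately have "\<epsilon> * (B^2 * 32) < g^2" by linarith
    then have "s^2 < (g / (4 * B))^2"
      using s(2) B by (simp add: power_divide field_simps)
    then have "s < g / (4 * B)" by (rule power_less_imp_less_base) (use g_pos B in simp)
    then have "4 * B * s < g" using B by (simp add: field_simps)
    then show ?thesis using B s g_pos by (intro divide_strict_left_mono mult_pos_pos) auto
  qed
  ultimately show ?thesis using l by auto
qed

lemma inv_cube_integral_eventually_below: "\<exists>l2. 2 * Gam_max < l2 \<and> (\<forall>l\<ge>l2. inv_cube_integral l < 1 / g)"
proof (intro exI conjI allI impI)
  define D where "D = 1 + g * (- p0)"
  have D: "1 \<le> D" using g_pos p0_neg by (simp add: D_def mult_pos_neg less_imp_le)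
  show "2 * Gam_max < 2 * Gam_max + D" using D by simp
  fix l assume ll: "2 * Gam_max + D \<le> l"
  have l: "2 * Gam_max < l" using ll D by simp
  have "inv_cube_integral l \<le> integral {p0..0} (\<lambda>p. 1 / D)"
    unfolding inv_cube_integral_def
  proof (rule integral_le[OF integrable_inv_cube[OF l] integrable_const_ivl])
    fix p assume p: "p \<in> {p0..0}"
    have "sqrt D \<le> aa \<gamma> l p" using radicand_bounds(1)[OF p, of l] ll by (simp add: aa_def)
    then have "sqrt D ^ 3 \<le> aa \<gamma> l p ^ 3" using D by (intro power_mono) auto
    moreover have "D \<le> sqrt D ^ 3"
      using D power_increasing[of 2 3 "sqrt D"] by simp
    ultimately have "D \<le> aa \<gamma> l p ^ 3" by linarith
    then show "1 / aa \<gamma> l p ^ 3 \<le> 1 / D" using D aa_pos[OF l p] by (intro divide_left_mono mult_pos_pos) auto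
  qed
  also have "\<dots> = (- p0) / D" using p0_neg by simp
  also have "\<dots> < 1 / g" using g_pos D p0_neg by (simp add: D_def field_simps)
  finally show "inv_cube_integral l < 1 / g" .
qed

lemma lam0_char: "2 * Gam_max < lam0 \<gamma> p0 g \<and> inv_cube_integral (lam0 \<gamma> p0 g) = 1 / g"
proof -
  obtain l1 where l1: "2 * Gam_max < l1" "1 / g < inv_cube_integral l1"
    using inv_cube_integral_exceeds by blast
  obtain l2 where l2: "\<forall>l\<ge>l2. inv_cube_integral l < 1 / g"
    using inv_cube_integral_eventually_below by blast
  define l3 where "l3 = max l2 (l1 + 1)"
  have l3: "l1 \<le> l3" "inv_cube_integral l3 < 1 / g" using l2 by (auto simp: l3_def)
  obtain l where l: "l1 \<le> l" "l \<le> l3" "inv_cube_integral l = 1 / g"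
    using IVT2'[of inv_cube_integral l3 "1 / g" l1, OF _ _ l3(1) continuous_on_inv_cube_integral[OF l1(1)]]
      l1 l3 by auto
  have lM: "2 * Gam_max < l" using l l1 by simp
  have unique: "l' = l" if l': "2 * Gam_max < l'" "inv_cube_integral l' = 1 / g" for l'
  proof -
    consider "l' < l" | "l' = l" | "l < l'" by linarith
    then show ?thesis
      using inv_cube_integral_strict_antimono[OF l'(1), of l] inv_cube_integral_strict_antimono[OF lM, of l']
        l'(2) l(3) by cases auto
  qed
  have "lam0 \<gamma> p0 g = l"
    unfolding lam0_def
  proof (rule the_equality)
    show "2 * Sup (\<Gamma> ` {p0..0}) < l \<and> 1 / g = integral {p0..0} (\<lambda>p. 1 / aa \<gamma> l p ^ 3)"
      using lM l(3) by (simp add: Gam_max_def inv_cube_integral_def)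
    fix l' assume "2 * Sup (\<Gamma> ` {p0..0}) < l' \<and> 1 / g = integral {p0..0} (\<lambda>p. 1 / aa \<gamma> l' p ^ 3)"
    then have "2 * Gam_max < l'" "inv_cube_integral l' = 1 / g"
      by (simp_all add: Gam_max_def inv_cube_integral_def)
    then show "l' = l" by (rule unique)
  qed
  then show ?thesis using lM l(3) by simp
qed

section \<open>The dispersion relation\<close>

abbreviation "L0 \<equiv> lam0 \<gamma> p0 g"

lemma lam0_gt: "2 * Gam_max < L0"
  using lam0_char by blast

text \<open>The paper's \<open>q(\<lambda>, \<mu>) = a\<^sup>3 z' / z\<close> at \<open>p = 0\<close>; see \<open>min_energy_eq_solution_ratio\<close>.\<close>
definition flux_ratio :: "real \<Rightarrow> real \<Rightarrow> real" where
  "flux_ratio l m = min_energy p0 0 (\<lambda>p. aa \<gamma> l p ^ 3) (\<lambda>p. m * aa \<gamma> l p)"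

lemma sturm_liouville_aa:
  assumes "2 * Gam_max < l" "0 \<le> m"
  shows "sturm_liouville p0 0 (\<lambda>p. aa \<gamma> l p ^ 3) (\<lambda>p. m * aa \<gamma> l p)"
proof unfold_locales
  show "p0 < 0" by (rule p0_neg)
  show "continuous_on {p0..0} (\<lambda>p. aa \<gamma> l p ^ 3)" "continuous_on {p0..0} (\<lambda>p. m * aa \<gamma> l p)"
    by (intro continuous_intros continuous_on_aa)+
  fix p assume "p \<in> {p0..0}"
  then have "0 < aa \<gamma> l p" by (rule aa_pos[OF assms(1)])
  then show "0 < aa \<gamma> l p ^ 3" "0 \<le> m * aa \<gamma> l p"
    using assms(2) by simp_all
qed

lemma flux_ratio_pos: "2 * Gam_max < l \<Longrightarrow> 0 \<le> m \<Longrightarrow> 0 < flux_ratio l m"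
  unfolding flux_ratio_def by (rule sturm_liouville.min_energy_pos[OF sturm_liouville_aa])

lemma flux_ratio_strict_mono:
  assumes l: "2 * Gam_max < l" "l < l'" and m: "0 \<le> m"
  shows "flux_ratio l m < flux_ratio l' m"
proof -
  define r where "r = sqrt (1 + (l' - l) / (l + 2 * gam_bound * (- p0)))"
  have r: "1 < r" using radicand_upper_pos[OF l(1)] l by (simp add: r_def)
  have "r * flux_ratio l m \<le> flux_ratio l' m"
    unfolding flux_ratio_def
  proof (rule min_energy_scale_mono[OF sturm_liouville_aa[OF l(1) m] sturm_liouville_aa[OF _ m]])
    show "2 * Gam_max < l'" "0 \<le> r" using l r by auto
    fix p assume p: "p \<in> {p0..0}"
    have stretch: "r * aa \<gamma> l p \<le> aa \<gamma> l' p"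
      using aa_stretch_lower[OF l(1) less_imp_le[OF l(2)] p] by (simp add: r_def)
    have "r * aa \<gamma> l p ^ 3 \<le> aa \<gamma> l' p ^ 3"
      using stretch aa_pos[OF l(1) p] r by (intro cube_stretch_lower) auto
    moreover have "r * (m * aa \<gamma> l p) \<le> m * aa \<gamma> l' p"
      using mult_left_mono[OF stretch m] by (simp add: ac_simps)
    ultimately show "r * aa \<gamma> l p ^ 3 \<le> aa \<gamma> l' p ^ 3 \<and> r * (m * aa \<gamma> l p) \<le> m * aa \<gamma> l' p" ..
  qed
  moreover have "flux_ratio l m < r * flux_ratio l m" using r flux_ratio_pos[OF l(1) m] by simp
  ultimately show ?thesis by linarith
qed

lemma flux_ratio_stretch:
  assumes l: "2 * Gam_max < l1" "l1 \<le> l" "l \<le> l'" and m: "0 \<le> m"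
  shows "flux_ratio l' m \<le> (1 + (l' - l) / (l1 - 2 * Gam_max))^2 * flux_ratio l m"
proof -
  define R where "R = 1 + (l' - l) / (l1 - 2 * Gam_max)"
  have R: "1 \<le> R" using l by (simp add: R_def)
  have l': "2 * Gam_max < l" "2 * Gam_max < l'" using l by auto
  have "1 / R^2 * flux_ratio l' m \<le> flux_ratio l m"
    unfolding flux_ratio_def
  proof (rule min_energy_scale_mono[OF sturm_liouville_aa[OF l'(2) m] sturm_liouville_aa[OF l'(1) m]])
    show "0 \<le> 1 / R^2" by simp
    fix p assume p: "p \<in> {p0..0}"
    have stretch: "aa \<gamma> l' p \<le> sqrt R * aa \<gamma> l p"
      using aa_stretch_upper[OF l p] by (simp add: R_def)
    have "sqrt R ^ 4 = (sqrt R ^ 2)^2" by (simp flip: power_mult)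
    then have R4: "sqrt R ^ 4 = R^2" using R by simp
    have "aa \<gamma> l' p ^ 3 \<le> R^2 * aa \<gamma> l p ^ 3" "aa \<gamma> l' p \<le> R^2 * aa \<gamma> l p"
      using cube_stretch_upper[OF _ _ stretch] aa_pos[OF l'(2) p] R R4 by auto
    then show "1 / R^2 * aa \<gamma> l' p ^ 3 \<le> aa \<gamma> l p ^ 3 \<and> 1 / R^2 * (m * aa \<gamma> l' p) \<le> m * aa \<gamma> l p"
      using R m by (auto simp: field_simps mult_left_mono)
  qed
  then show ?thesis using R by (simp add: R_def field_simps)
qed

lemma flux_ratio_mono:
  "2 * Gam_max < l \<Longrightarrow> l \<le> l' \<Longrightarrow> 0 \<le> m \<Longrightarrow> flux_ratio l m \<le> flux_ratio l' m"
  using flux_ratio_strict_mono[of l l' m] by (cases "l = l'") auto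

lemma continuous_on_flux_ratio:
  assumes l1: "2 * Gam_max < l1" and m: "0 \<le> m"
  shows "continuous_on {l1..l2} (\<lambda>l. flux_ratio l m)"
proof (cases "l1 \<le> l2")
  case True
  have "\<bar>flux_ratio y m - flux_ratio x m\<bar>
      \<le> ((1 + (y - x) / (l1 - 2 * Gam_max))^2 - 1) * flux_ratio l2 m"
    if "l1 \<le> x" "x \<le> y" "y \<le> l2" for x y
  proof -
    define R where "R = 1 + (y - x) / (l1 - 2 * Gam_max)"
    have R: "1 \<le> R^2" using that l1 by (simp add: R_def)
    have "flux_ratio y m \<le> R^2 * flux_ratio x m"
      using flux_ratio_stretch[OF l1 that(1,2) m] by (simp add: R_def)
    moreover have "flux_ratio x m \<le> flux_ratio y m" "flux_ratio x m \<le> flux_ratio l2 m"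
      using flux_ratio_mono[of x _ m] l1 that m by auto
    ultimately have "\<bar>flux_ratio y m - flux_ratio x m\<bar> \<le> (R^2 - 1) * flux_ratio x m"
      by (simp add: algebra_simps)
    also have "\<dots> \<le> (R^2 - 1) * flux_ratio l2 m"
      using R \<open>flux_ratio x m \<le> flux_ratio l2 m\<close> by (intro mult_left_mono) auto
    finally show ?thesis by (simp add: R_def)
  qed
  from lipschitz_on_if_stretch_bound[OF _ _ True this] show ?thesis
    using l1 True flux_ratio_pos[of l2 m] m by (intro lipschitz_on_continuous_on) auto
qed simp

lemma flux_ratio_concave:
  assumes l: "2 * Gam_max < l" and m: "0 \<le> m1" "0 \<le> m2" and t: "0 \<le> t" "t \<le> 1"
  shows "t * flux_ratio l m1 + (1 - t) * flux_ratio l m2 \<le> flux_ratio l (t * m1 + (1 - t) * m2)"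
proof -
  have "0 \<le> t * m1 + (1 - t) * m2" using m t by simp
  then show ?thesis
    unfolding flux_ratio_def
    using t by (intro min_energy_concave_in_c sturm_liouville_aa[OF l] m) (auto simp: algebra_simps)
qed

lemma flux_ratio_lower:
  assumes l: "2 * Gam_max < l" and m: "0 \<le> m"
  shows "sqrt (l - 2 * Gam_max) ^ 3 / (- p0) \<le> flux_ratio l m"
proof -
  have "sqrt (l - 2 * Gam_max) ^ 3 \<le> aa \<gamma> l p ^ 3" if "p \<in> {p0..0}" for p
    using radicand_bounds(1)[OF that, of l] l by (intro power_mono) (auto simp: aa_def)
  then have "sqrt (l - 2 * Gam_max) ^ 3 / (0 - p0) \<le> flux_ratio l m"
    unfolding flux_ratio_def using l by (intro min_energy_ge_width[OF sturm_liouville_aa[OF l m]]) auto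
  then show ?thesis by simp
qed

lemma is_zsol_of_sl_solution:
  assumes l: "2 * Gam_max < l" and m: "0 \<le> m"
    and sol: "sl_solution p0 0 (\<lambda>p. aa \<gamma> l p ^ 3) (\<lambda>p. m * aa \<gamma> l p) Z W"
  shows "is_zsol \<gamma> p0 l m Z (\<lambda>p. W p / aa \<gamma> l p ^ 3)"
proof -
  interpret sturm_liouville p0 0 "\<lambda>p. aa \<gamma> l p ^ 3" "\<lambda>p. m * aa \<gamma> l p"
    by (rule sturm_liouville_aa[OF l m])
  show ?thesis
    unfolding is_zsol_def
  proof (intro conjI ballI)
    show "(Z has_real_derivative W p / aa \<gamma> l p ^ 3) (at p within {p0..0})" if "p \<in> {p0..0}" for p
      using sol that by (simp add: sl_solution_def)
    show "continuous_on {p0..0} (\<lambda>p. W p / aa \<gamma> l p ^ 3)"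
      by (intro continuous_on_divide_b sl_solution_continuous[OF sol])
    show "Z p0 = 0" "W p0 / aa \<gamma> l p0 ^ 3 = 1"
      using sol b_x0_pos by (auto simp: sl_solution_def)
    fix p assume p: "p \<in> {p0<..<0}"
    have "(W has_real_derivative m * aa \<gamma> l p * Z p) (at p)"
      using sl_solution_has_derivative_at(2)[OF sol p] by simp
    then show "((\<lambda>q. aa \<gamma> l q ^ 3 * (W q / aa \<gamma> l q ^ 3)) has_real_derivative m * aa \<gamma> l p * Z p) (at p)"
    proof (rule has_field_derivative_transform_within_open[where S="{p0<..<0}"])
      show "W q = aa \<gamma> l q ^ 3 * (W q / aa \<gamma> l q ^ 3)" if "q \<in> {p0<..<0}" for q
        using b_pos[of q] that by simp
    qed (use p in auto)
  qed
qed

lemma Xi_eq_scaled_dispersion: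
  assumes l: "2 * Gam_max < l" and m: "0 \<le> m"
  shows "\<exists>z0>0. Xi \<gamma> p0 g \<sigma> l m = z0 * (flux_ratio l m - g - \<sigma> * m)"
proof -
  interpret sl: sturm_liouville p0 0 "\<lambda>p. aa \<gamma> l p ^ 3" "\<lambda>p. m * aa \<gamma> l p"
    by (rule sturm_liouville_aa[OF l m])
  obtain Z W where sol: "sl_solution p0 0 (\<lambda>p. aa \<gamma> l p ^ 3) (\<lambda>p. m * aa \<gamma> l p) Z W"
    using sl.sl_solution_exists by blast
  have zero: "0 \<in> {p0..0}" using p0_neg by simp
  have Z0: "0 < Z 0" using sl.sl_solution_pos[OF sol zero p0_neg] .
  have l_pos: "0 < l" using l Gam_max_nonneg by simp
  have b0: "aa \<gamma> l 0 ^ 3 = l powr (3/2)"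
    using powr_three_halves[OF l_pos] by (simp add: aa_def Gam_def)
  have "Xi \<gamma> p0 g \<sigma> l m = l powr (3/2) * (W 0 / aa \<gamma> l 0 ^ 3) - (g + \<sigma> * m) * Z 0"
    unfolding Xi_def
  proof (rule the_equality)
    show "\<exists>z z'. is_zsol \<gamma> p0 l m z z' \<and>
        l powr (3/2) * (W 0 / aa \<gamma> l 0 ^ 3) - (g + \<sigma> * m) * Z 0 = l powr (3/2) * z' 0 - (g + \<sigma> * m) * z 0"
      using is_zsol_of_sl_solution[OF l m sol] by blast
    fix v assume "\<exists>z z'. is_zsol \<gamma> p0 l m z z' \<and> v = l powr (3/2) * z' 0 - (g + \<sigma> * m) * z 0"
    then obtain z z' where zs: "is_zsol \<gamma> p0 l m z z'" and v: "v = l powr (3/2) * z' 0 - (g + \<sigma> * m) * z 0"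
      by blast
    have "z 0 = Z 0 \<and> aa \<gamma> l 0 ^ 3 * z' 0 = W 0"
      using zs unfolding is_zsol_def
      by (intro sl.second_order_solution_unique[OF sol _ _ _ _ _ zero]) (auto simp: mult.assoc)
    then show "v = l powr (3/2) * (W 0 / aa \<gamma> l 0 ^ 3) - (g + \<sigma> * m) * Z 0"
      using v sl.b_pos[OF zero] b0 by (auto simp: field_simps)
  qed
  also have "\<dots> = Z 0 * (W 0 / Z 0 - g - \<sigma> * m)"
    using b0 Z0 l_pos by (simp add: field_simps)
  also have "W 0 / Z 0 = flux_ratio l m"
    unfolding flux_ratio_def by (rule sl.min_energy_eq_solution_ratio[OF sol, symmetric])
  finally show ?thesis using Z0 by blast
qed

end

locale largest_zero_exists = piecewise_vorticity +
  assumes largest_zero: "\<forall>l \<ge> lam0 (gam p1 \<gamma>1 \<gamma>2) p0 g. \<exists>m \<ge> 0.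
           Xi (gam p1 \<gamma>1 \<gamma>2) p0 g \<sigma> l m = 0 \<and> (\<forall>m'>m. Xi (gam p1 \<gamma>1 \<gamma>2) p0 g \<sigma> l m' < 0)"
begin

abbreviation "\<mu> \<equiv> muf \<gamma> p0 g \<sigma>"

definition dispersion :: "real \<Rightarrow> real \<Rightarrow> real" where
  "dispersion l m = flux_ratio l m - g - \<sigma> * m"

lemma dispersion_sign:
  assumes "2 * Gam_max < l" "0 \<le> m"
  shows "Xi \<gamma> p0 g \<sigma> l m = 0 \<longleftrightarrow> dispersion l m = 0" "Xi \<gamma> p0 g \<sigma> l m < 0 \<longleftrightarrow> dispersion l m < 0"
  using Xi_eq_scaled_dispersion[OF assms]
  by (auto simp: dispersion_def mult_less_0_iff)

lemma mu_char:
  assumes l: "L0 \<le> l"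
  shows "0 \<le> \<mu> l" "dispersion l (\<mu> l) = 0" "\<And>m. \<mu> l < m \<Longrightarrow> dispersion l m < 0"
proof -
  have lM: "2 * Gam_max < l" using l lam0_gt by simp
  obtain m where m: "0 \<le> m" "Xi \<gamma> p0 g \<sigma> l m = 0" "\<forall>m'>m. Xi \<gamma> p0 g \<sigma> l m' < 0"
    using largest_zero l by blast
  have "\<mu> l = m"
    unfolding muf_def
  proof (rule the_equality)
    show "0 \<le> m \<and> Xi \<gamma> p0 g \<sigma> l m = 0 \<and> (\<forall>m'>m. Xi \<gamma> p0 g \<sigma> l m' < 0)" using m by blast
    fix m2 assume m2: "0 \<le> m2 \<and> Xi \<gamma> p0 g \<sigma> l m2 = 0 \<and> (\<forall>m'>m2. Xi \<gamma> p0 g \<sigma> l m' < 0)"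
    show "m2 = m" using m m2 by (cases m m2 rule: linorder_cases) auto
  qed
  then show "0 \<le> \<mu> l" "dispersion l (\<mu> l) = 0" "\<And>m'. \<mu> l < m' \<Longrightarrow> dispersion l m' < 0"
    using m dispersion_sign[OF lM] by auto
qed

lemma le_mu_if_dispersion_pos:
  assumes "L0 \<le> l" "0 < dispersion l m"
  shows "m \<le> \<mu> l"
proof (rule ccontr)
  assume "\<not> m \<le> \<mu> l"
  then have "dispersion l m < 0" using mu_char(3)[OF assms(1)] by simp
  with assms(2) show False by simp
qed

lemma dispersion_strict_mono: "L0 \<le> l \<Longrightarrow> l < l' \<Longrightarrow> 0 \<le> m \<Longrightarrow> dispersion l m < dispersion l' m"
  using flux_ratio_strict_mono[of l l' m] lam0_gt by (simp add: dispersion_def)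

lemma mu_strict_mono:
  assumes l: "L0 \<le> l" "l < l'"
  shows "\<mu> l < \<mu> l'"
proof -
  have "0 < dispersion l' (\<mu> l)"
    using dispersion_strict_mono[OF l mu_char(1)[OF l(1)]] mu_char(2)[OF l(1)] by simp
  moreover have "dispersion l' (\<mu> l') = 0" using mu_char(2) l by simp
  moreover have "\<mu> l \<le> \<mu> l'" by (rule le_mu_if_dispersion_pos) (use l calculation in auto)
  ultimately show ?thesis by (cases "\<mu> l = \<mu> l'") auto
qed

text \<open>The dispersion vanishes at \<open>(L0, \<mu> L0)\<close> and increases in \<open>l\<close>, so it is positive at
  \<open>(l, \<mu> L0)\<close>; it vanishes at \<open>(l, \<mu> l)\<close>, and concavity in \<open>m\<close> interpolates.\<close>
lemma dispersion_pos_below_mu: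
  assumes l: "L0 < l" and m: "\<mu> L0 \<le> m" "m < \<mu> l"
  shows "0 < dispersion l m"
proof -
  define t where "t = (\<mu> l - m) / (\<mu> l - \<mu> L0)"
  have t: "0 < t" "t \<le> 1" using m by (auto simp: t_def)
  have "t * (\<mu> l - \<mu> L0) = \<mu> l - m" using m by (simp add: t_def)
  then have mt: "m = t * \<mu> L0 + (1 - t) * \<mu> l" by (simp add: algebra_simps)
  have "0 < dispersion l (\<mu> L0)"
    using dispersion_strict_mono[OF order_refl l mu_char(1)[OF order_refl]] mu_char(2)[OF order_refl] by simp
  then have "0 < t * dispersion l (\<mu> L0) + (1 - t) * dispersion l (\<mu> l)"
    using mu_char(2)[of l] l t by simp
  also have "\<dots> \<le> dispersion l m"
    unfolding mt dispersion_def
    using flux_ratio_concave[of l "\<mu> L0" "\<mu> l" t] mu_char(1)[of L0] mu_char(1)[of l] lam0_gt l t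
    by (simp add: algebra_simps)
  finally show ?thesis .
qed

lemma mu_eq_if_dispersion_zero:
  assumes l: "L0 \<le> l" and y: "\<mu> L0 \<le> y" "dispersion l y = 0"
  shows "\<mu> l = y"
proof (cases "\<mu> l" y rule: linorder_cases)
  case less
  then show ?thesis using mu_char(3)[OF l less] y by simp
next
  case greater
  with y l have "L0 < l" by (cases "l = L0") auto
  then show ?thesis using dispersion_pos_below_mu[OF _ y(1) greater] y by simp
qed

lemma mu_superlinear:
  assumes C: "0 < C"
  shows "\<exists>N. \<forall>l\<ge>N. C * l \<le> \<mu> l"
proof -
  define T where "T = 2 * (- p0) * (\<sigma> * C + 1)"
  have T: "0 \<le> T" unfolding T_def using p0_neg \<sigma>_pos C by (intro mult_nonneg_nonneg) auto
  define N where "N = max L0 (max (4 * Gam_max) (max (g + 1) (max 1 (2 * T^2))))"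
  have "C * l \<le> \<mu> l" if lN: "N \<le> l" for l
  proof -
    have l: "L0 \<le> l" "4 * Gam_max \<le> l" "g + 1 \<le> l" "1 \<le> l" "2 * T^2 \<le> l"
      using lN by (auto simp: N_def)
    define u where "u = l - 2 * Gam_max"
    have u: "l / 2 \<le> u" using l(2) by (simp add: u_def)
    have "T^2 \<le> u" using l(5) u by simp
    then have su: "T \<le> sqrt u" using T real_sqrt_le_mono by fastforce
    have "l / 2 * T \<le> u * sqrt u" using u su T l(4) by (intro mult_mono) auto
    also have "u * sqrt u = sqrt u ^ 3"
      using u l(4) by (simp add: power3_eq_cube)
    finally have "l * (\<sigma> * C + 1) \<le> sqrt u ^ 3 / (- p0)"
      using p0_neg by (simp add: T_def field_simps)
    also have "\<dots> \<le> flux_ratio l (C * l)"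
      using flux_ratio_lower[of l "C * l"] lam0_gt l C by (simp add: u_def)
    finally have "0 < dispersion l (C * l)"
      using l(3) by (simp add: dispersion_def algebra_simps)
    then show ?thesis using le_mu_if_dispersion_pos l(1) by blast
  qed
  then show ?thesis by blast
qed

lemma mu_over_lambda_tendsto: "filterlim (\<lambda>l. \<mu> l / l) at_top at_top"
  unfolding filterlim_at_top eventually_at_top_linorder
proof
  fix Z :: real
  define C where "C = max Z 1"
  have C: "0 < C" "Z \<le> C" by (auto simp: C_def)
  then obtain N where N: "\<forall>l\<ge>N. C * l \<le> \<mu> l" using mu_superlinear by blast
  have "Z \<le> \<mu> l / l" if "max N 1 \<le> l" for l
  proof -
    have "C * l \<le> \<mu> l" using N that by simp
    then have "C \<le> \<mu> l / l" using that by (simp add: pos_le_divide_eq)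
    then show ?thesis using C(2) by simp
  qed
  then show "\<exists>N. \<forall>l\<ge>N. Z \<le> \<mu> l / l" by blast
qed

lemma mu_surj:
  assumes y: "\<mu> L0 \<le> y"
  shows "\<exists>l\<ge>L0. \<mu> l = y"
proof -
  obtain N where N: "\<forall>l\<ge>N. 1 * l \<le> \<mu> l" using mu_superlinear[of 1] by auto
  define l1 where "l1 = max N (max (L0 + 1) (\<bar>y\<bar> + 1))"
  have "l1 \<le> \<mu> l1" using N[rule_format, of l1] by (simp add: l1_def)
  moreover have "L0 < l1" "y < l1" using abs_ge_self[of y] by (simp_all add: l1_def)
  ultimately have l1: "L0 < l1" "y < \<mu> l1" by simp_all
  have "dispersion L0 y \<le> 0"
    using mu_char(2,3)[of L0] y by (cases "y = \<mu> L0") (auto intro: less_imp_le)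
  moreover have "0 \<le> dispersion l1 y"
    using dispersion_pos_below_mu[OF l1(1) y l1(2)] by simp
  moreover have "continuous_on {L0..l1} (\<lambda>l. dispersion l y)"
    unfolding dispersion_def using lam0_gt y mu_char(1)[of L0]
    by (intro continuous_intros continuous_on_flux_ratio) auto
  ultimately obtain l where "L0 \<le> l" "l \<le> l1" "dispersion l y = 0"
    using IVT'[of "\<lambda>l. dispersion l y" L0 0 l1] l1 by auto
  then show ?thesis using mu_eq_if_dispersion_zero y by blast
qed

lemma mu_bij: "bij_betw \<mu> {L0..} {\<mu> L0..}"
  unfolding bij_betw_def
proof
  show "inj_on \<mu> {L0..}"
  proof (rule inj_onI)
    fix x y assume "x \<in> {L0..}" "y \<in> {L0..}" "\<mu> x = \<mu> y"
    then show "x = y" using mu_strict_mono[of x y] mu_strict_mono[of y x]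
      by (cases x y rule: linorder_cases) auto
  qed
  have "\<mu> L0 \<le> \<mu> l" if "L0 \<le> l" for l
    using mu_strict_mono[of L0 l] that by (cases "l = L0") auto
  then show "\<mu> ` {L0..} = {\<mu> L0..}"
    using mu_surj by fastforce
qed

end

theorem lemma4p7:
  fixes g \<sigma> p0 p1 \<alpha> :: real and \<gamma>1 \<gamma>2 :: "real \<Rightarrow> real"
  assumes "g > 0" and "\<sigma> > 0" and "p0 < p1" and "p1 < 0"
    and "0 < \<alpha>" and "\<alpha> < 1"
    and "holder_on \<alpha> {p0..p1} \<gamma>1" and "holder_on \<alpha> {p1..0} \<gamma>2"
    and "\<forall>l \<ge> lam0 (gam p1 \<gamma>1 \<gamma>2) p0 g. \<exists>m \<ge> 0.
           Xi (gam p1 \<gamma>1 \<gamma>2) p0 g \<sigma> l m = 0 \<and>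
           (\<forall>m'>m. Xi (gam p1 \<gamma>1 \<gamma>2) p0 g \<sigma> l m' < 0)"
  shows "filterlim (\<lambda>l. muf (gam p1 \<gamma>1 \<gamma>2) p0 g \<sigma> l / l) at_top at_top \<and>
         bij_betw (muf (gam p1 \<gamma>1 \<gamma>2) p0 g \<sigma>)
           {lam0 (gam p1 \<gamma>1 \<gamma>2) p0 g..}
           {muf (gam p1 \<gamma>1 \<gamma>2) p0 g \<sigma> (lam0 (gam p1 \<gamma>1 \<gamma>2) p0 g)..}"
proof -
  interpret largest_zero_exists g \<sigma> p0 p1 \<alpha> \<gamma>1 \<gamma>2
    using assms by unfold_locales auto
  show ?thesis using mu_over_lambda_tendsto mu_bij by simp
qed

end
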